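(* Let $\varphi:V\to V$ be an $R$-linear map, where $R=\mathbb{R}[t^{\pm1}]$ and $V$ is a free $R$-module of rank $n-1$. Suppose that the $\mathbb{E}$-linear map $\varphi\otimes_R\mathrm{Id}:V\otimes_R\mathbb{E}\to V\otimes_R\mathbb{E}$ has all of its eigenvalues $(\lambda_1,\dots,\lambda_{n-1})$ in $\mathbb{E}$. Then for every $m\geq1$, every eigenvalue of the $\mathbb{F}_m$-linear map $\varphi^{\otimes_{\mathbb{R}}m}\otimes_{R_m}\mathrm{Id}:V_m\otimes_{R_m}\mathbb{F}_m\to V_m\otimes_{R_m}\mathbb{F}_m$ is of the form $\lambda_{i_1}\otimes\cdots\otimes\lambda_{i_m}$ with $1\leq i_1,\dots,i_m\leq n-1$.
   Context: $\mathbb{E}=\bigcup_{k\ge1}\mathbb{R}((t^{1/k}))$ is the field of Puiseux series over $\mathbb{R}$, containing $R$. $R_m=R^{\otimes_{\mathbb{R}}m}$, $\mathbb{E}_m=\mathbb{E}^{\otimes_{\mathbb{R}}m}\supset R_m$, which is an integral domain with field of fractions $\mathbb{F}_m$; $V_m=V^{\otimes_{\mathbb{R}}m}$ is an $R_m$-module via $(r_1\otimes\cdots\otimes r_m)(u_1\otimes\cdots\otimes u_m)=r_1u_1\otimes\cdots\otimes r_mu_m$, and $\varphi^{\otimes_{\mathbb{R}}m}(u_1\otimes\cdots\otimes u_m)=\varphi(u_1)\otimes\cdots\otimes\varphi(u_m)$. Elements $\lambda_{i_1}\otimes\cdots\otimes\lambda_{i_m}\in\mathbb{E}_m$ are regarded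 in $\mathbb{F}_m$. *)

theory Defs
  imports Complex_Main
begin

text \<open>Puiseux series over the reals, represented by their coefficient functions
  rat => real: a series sum_q c(q) t^q lies in E iff its support is contained in
  (1/k)Z for some k > 0 and is bounded below.\<close>

type_synonym ser = "rat \<Rightarrow> real"

definition puiseux :: "ser set" where
  "puiseux = {f. \<exists>k::nat. k > 0 \<and> (\<exists>N::int. \<forall>q. f q \<noteq> 0 \<longrightarrow>
       (\<exists>z::int. q = of_int z / of_nat k) \<and> of_int N \<le> q)}"

definition laurent_poly :: "ser set" where
  "laurent_poly = {f. finite {q. f q \<noteq> 0} \<and> (\<forall>q. f q \<noteq> 0 \<longrightarrow> q \<in> \<int>)}"

definition ser_zero :: ser where "ser_zero = (\<lambda>q. 0)"
definition ser_one :: ser where "ser_one = (\<lambda>q. if q = 0 then 1 else 0)"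
definition ser_diff :: "ser \<Rightarrow> ser \<Rightarrow> ser" where "ser_diff f g = (\<lambda>q. f q - g q)"

text \<open>Multiplication (Cauchy product; the sum is finite for Puiseux series).\<close>
definition ser_mult :: "ser \<Rightarrow> ser \<Rightarrow> ser" where
  "ser_mult f g = (\<lambda>q. \<Sum>(u, v)\<in>{(u, v). u + v = q \<and> f u \<noteq> 0 \<and> g v \<noteq> 0}. f u * g v)"

definition minor :: "(nat \<Rightarrow> nat \<Rightarrow> 'a) \<Rightarrow> nat \<Rightarrow> nat \<Rightarrow> (nat \<Rightarrow> nat \<Rightarrow> 'a)" where
  "minor M i j = (\<lambda>a b. M (if a < i then a else Suc a) (if b < j then b else Suc b))"

fun ser_det :: "nat \<Rightarrow> (nat \<Rightarrow> nat \<Rightarrow> ser) \<Rightarrow> ser" where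
  "ser_det 0 M = ser_one"
| "ser_det (Suc k) M =
     (\<lambda>q. \<Sum>j<Suc k. (-1) ^ j * ser_mult (M 0 j) (ser_det k (minor M 0 j)) q)"

definition char_poly_at :: "nat \<Rightarrow> (nat \<Rightarrow> nat \<Rightarrow> ser) \<Rightarrow> ser \<Rightarrow> ser" where
  "char_poly_at N A x = ser_det N (\<lambda>i j. ser_diff (if i = j then x else ser_zero) (A i j))"

text \<open>The tensor power E_m = E (x)_R ... (x)_R E, realised as series in m variables
  t_0..t_(m-1) with rational exponents; coefficient functions on exponent vectors
  (nat => rat) that vanish outside the first m coordinates.
  f_0 (x) ... (x) f_(m-1) corresponds to the coefficientwise product.\<close>

type_synonym mser = "(nat \<Rightarrow> rat) \<Rightarrow> real"

definition tens :: "nat \<Rightarrow> (nat \<Rightarrow> ser) \<Rightarrow> mser" where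
  "tens m fs = (\<lambda>e. if (\<forall>j\<ge>m. e j = 0) then (\<Prod>j<m. fs j (e j)) else 0)"

definition Em :: "nat \<Rightarrow> mser set" where
  "Em m = {c. \<exists>L :: (nat \<Rightarrow> ser) list. (\<forall>fs\<in>set L. \<forall>j<m. fs j \<in> puiseux) \<and>
              c = (\<lambda>e. \<Sum>fs\<leftarrow>L. tens m fs e)}"

definition mser_mult :: "mser \<Rightarrow> mser \<Rightarrow> mser" where
  "mser_mult c d = (\<lambda>e. \<Sum>(u, v)\<in>{(u, v). (\<forall>i. u i + v i = e i) \<and> c u \<noteq> 0 \<and> d v \<noteq> 0}.
                          c u * d v)"

text \<open>Index set of the standard basis e_(i_1) (x) ... (x) e_(i_m) of V_m (0-based).\<close>
definition idx :: "nat \<Rightarrow> nat \<Rightarrow> nat list set" where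
  "idx m N = {is. length is = m \<and> (\<forall>i\<in>set is. i < N)}"

text \<open>Matrix of phi^(x m) in that basis (entries in R_m, a subring of E_m).\<close>
definition tensor_matrix :: "nat \<Rightarrow> (nat \<Rightarrow> nat \<Rightarrow> ser) \<Rightarrow> nat list \<Rightarrow> nat list \<Rightarrow> mser" where
  "tensor_matrix m A = (\<lambda>is js. tens m (\<lambda>j. A (is ! j) (js ! j)))"

text \<open>a/b (a, b in E_m, b nonzero) is an eigenvalue over F_m = Frac(E_m) of the
  matrix M indexed by idx m N: there is a nonzero eigenvector, which after clearing
  denominators can be taken with entries in E_m, satisfying b (M w) = a w.\<close>
definition frac_eigenvalue :: "nat \<Rightarrow> nat \<Rightarrow> (nat list \<Rightarrow> nat list \<Rightarrow> mser) \<Rightarrow> mser \<Rightarrow> mser \<Rightarrow> bool" where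
  "frac_eigenvalue m N M a b \<longleftrightarrow>
     (\<exists>w. (\<forall>js\<in>idx m N. w js \<in> Em m) \<and> (\<exists>js\<in>idx m N. w js \<noteq> (\<lambda>e. 0)) \<and>
          (\<forall>is\<in>idx m N. mser_mult b (\<lambda>e. \<Sum>js\<in>idx m N. mser_mult (M is js) (w js) e)
                          = mser_mult a (w is)))"

end

theory Submission
  imports Defs "Jordan_Normal_Form.Char_Poly" "HOL-Library.Function_Algebras"
begin

text \<open>
  All the series involved (elements of \<open>E\<^sub>m\<close>, entries of the matrix of \<open>\<phi>\<^sup>\<otimes>\<^sup>m\<close>) lie in the ring of
  real series in \<open>t\<^sub>1, \<dots>, t\<^sub>m\<close> whose exponents lie in a lattice \<open>(1/k)\<int>\<^sup>m\<close> and are bounded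
  below. This ring is an integral domain (compare lexicographically least exponents), so the
  eigenvalue equation \<open>b (M w) = a w\<close> can be studied there without passing to \<open>F\<^sub>m\<close>.
  The \<open>j\<close>-th copy of \<open>E\<close> embeds as series in \<open>t\<^sub>j\<close>; write \<open>A\<^sub>j\<close> for the matrix \<open>A\<close> of \<open>\<phi>\<close> read
  in \<open>t\<^sub>j\<close>. The matrix of \<open>\<phi>\<^sup>\<otimes>\<^sup>m\<close> is the composite of the commuting actions of the \<open>A\<^sub>j\<close> on
  the \<open>j\<close>-th tensor factor, and \<open>\<Prod>\<^sub>i (A\<^sub>j - \<lambda>\<^sub>i(t\<^sub>j)) = 0\<close> by Cayley--Hamilton, since the
  characteristic polynomial of \<open>A\<^sub>j\<close> is the image of that of \<open>A\<close>. Applying suitable partial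
  products of these factors to an eigenvector \<open>w\<close>, one finds for \<open>j = 1, \<dots>, m\<close> in turn a nonzero
  vector that is moreover an eigenvector of \<open>A\<^sub>1, \<dots>, A\<^sub>j\<close> on their factors, with eigenvalues
  \<open>\<lambda>\<^sub>i\<^sub>1(t\<^sub>1), \<dots>, \<lambda>\<^sub>i\<^sub>j(t\<^sub>j)\<close>. For \<open>j = m\<close> the matrix of \<open>\<phi>\<^sup>\<otimes>\<^sup>m\<close> acts on it by
  \<open>\<lambda>\<^sub>i\<^sub>1 \<otimes> \<dots> \<otimes> \<lambda>\<^sub>i\<^sub>m\<close>, whence \<open>a = b (\<lambda>\<^sub>i\<^sub>1 \<otimes> \<dots> \<otimes> \<lambda>\<^sub>i\<^sub>m)\<close>.
\<close>

section \<open>Sums over the support\<close>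

definition supp_sum :: "('a \<Rightarrow> real) \<Rightarrow> real" where
  "supp_sum g = (\<Sum>x\<in>{x. g x \<noteq> 0}. g x)"

lemma supp_sum_eq_sum: assumes "finite S" "{x. g x \<noteq> 0} \<subseteq> S" shows "supp_sum g = sum g S"
  unfolding supp_sum_def by (rule sum.mono_neutral_left[OF assms]) auto

lemma supp_sum_reindex: assumes "inj h" "{x. g x \<noteq> 0} \<subseteq> range h"
  shows "supp_sum (\<lambda>x. g (h x)) = supp_sum g"
proof -
  have "bij_betw h {x. g (h x) \<noteq> 0} {y. g y \<noteq> 0}"
    unfolding bij_betw_def using assms by (auto intro: inj_on_subset)
  then show ?thesis unfolding supp_sum_def by (rule sum.reindex_bij_betw)
qed

lemma supp_sum_reindex_bij: "bij h \<Longrightarrow> supp_sum (\<lambda>x. g (h x)) = supp_sum g"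
  by (intro supp_sum_reindex) (auto simp: bij_def)

lemma supp_sum_cmult: "supp_sum (\<lambda>x. r * g x) = r * supp_sum g"
  by (cases "r = 0") (simp_all add: supp_sum_def sum_distrib_left)

lemma supp_sum_multc: "supp_sum (\<lambda>x. g x * r) = supp_sum g * r"
  using supp_sum_cmult[of r g] by (simp add: mult.commute)

lemma supp_sum_add: assumes "finite {x. g x \<noteq> 0}" "finite {x. h x \<noteq> 0}"
  shows "supp_sum (\<lambda>x. g x + h x) = supp_sum g + supp_sum h"
proof -
  let ?S = "{x. g x \<noteq> 0} \<union> {x. h x \<noteq> 0}"
  have "finite ?S" using assms by simp
  then show ?thesis
    by (subst (1 2 3) supp_sum_eq_sum[of ?S]) (auto simp: sum.distrib)
qed

lemma supp_sum_singleton: "{x. g x \<noteq> 0} \<subseteq> {a} \<Longrightarrow> supp_sum g = g a"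
  using supp_sum_eq_sum[of "{a}" g] by simp

lemma supp_sum_nonzero_imp: "supp_sum g \<noteq> 0 \<Longrightarrow> \<exists>x. g x \<noteq> 0"
  unfolding supp_sum_def by (metis (mono_tags, lifting) empty_Collect_eq sum.empty)

lemma supp_sum_swap: assumes "finite {(x, y). F x y \<noteq> 0}"
  shows "supp_sum (\<lambda>x. supp_sum (\<lambda>y. F x y)) = supp_sum (\<lambda>y. supp_sum (\<lambda>x. F x y))"
proof -
  let ?P = "{(x, y). F x y \<noteq> 0}"
  let ?S = "fst ` ?P" and ?T = "snd ` ?P"
  have fS: "finite ?S" and fT: "finite ?T" using assms by auto
  have inner1: "supp_sum (F x) = sum (F x) ?T" for x
    by (rule supp_sum_eq_sum[OF fT]) (auto simp: image_iff)
  have inner2: "supp_sum (\<lambda>x. F x y) = sum (\<lambda>x. F x y) ?S" for y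
    by (rule supp_sum_eq_sum[OF fS]) (auto simp: image_iff)
  have "supp_sum (\<lambda>x. sum (F x) ?T) = sum (\<lambda>x. sum (F x) ?T) ?S"
    by (rule supp_sum_eq_sum[OF fS]) (force simp: image_iff dest: sum.not_neutral_contains_not_neutral)
  also have "\<dots> = sum (\<lambda>y. sum (\<lambda>x. F x y) ?S) ?T" by (rule sum.swap)
  also have "\<dots> = supp_sum (\<lambda>y. sum (\<lambda>x. F x y) ?S)"
    by (rule supp_sum_eq_sum[OF fT, symmetric])
       (force simp: image_iff dest: sum.not_neutral_contains_not_neutral)
  finally show ?thesis by (simp add: inner1 inner2)
qed

lemma mser_mult_supp_sum: "mser_mult c d e = supp_sum (\<lambda>u. c u * d (e - u))"
proof -
  let ?P = "{(u, v). (\<forall>i. u i + v i = e i) \<and> c u \<noteq> 0 \<and> d v \<noteq> 0}"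
  have eq: "(\<forall>i. u i + v i = e i) \<longleftrightarrow> v = e - u" for u v :: "nat \<Rightarrow> rat"
    by (auto simp: fun_eq_iff algebra_simps)
  have "bij_betw (\<lambda>u. (u, e - u)) {u. c u * d (e - u) \<noteq> 0} ?P"
    unfolding bij_betw_def inj_on_def by (auto simp: eq image_iff)
  from sum.reindex_bij_betw[OF this, of "\<lambda>(u,v). c u * d v"]
  show ?thesis unfolding mser_mult_def supp_sum_def by simp
qed

lemma ser_mult_supp_sum: "ser_mult f g q = supp_sum (\<lambda>u. f u * g (q - u))"
proof -
  let ?P = "{(u, v). u + v = q \<and> f u \<noteq> 0 \<and> g v \<noteq> 0}"
  have "bij_betw (\<lambda>u. (u, q - u)) {u. f u * g (q - u) \<noteq> 0} ?P"
    unfolding bij_betw_def inj_on_def by (auto simp: image_iff)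
  from sum.reindex_bij_betw[OF this, of "\<lambda>(u,v). f u * g v"]
  show ?thesis unfolding ser_mult_def supp_sum_def by simp
qed

section \<open>A domain of multivariate Puiseux series\<close>

type_synonym expo = "nat \<Rightarrow> rat"

definition grid :: "nat \<Rightarrow> int \<Rightarrow> nat \<Rightarrow> expo set" where
  "grid k N m = {e. (\<forall>j\<ge>m. e j = 0) \<and> (\<forall>j. (\<exists>z::int. e j = of_int z / of_nat k) \<and> of_int N \<le> e j)}"

definition is_mpuiseux :: "mser \<Rightarrow> bool" where
  "is_mpuiseux c \<longleftrightarrow> (\<exists>k>0. \<exists>N m. {e. c e \<noteq> 0} \<subseteq> grid k N m)"

lemma gridI: "(\<And>j. m \<le> j \<Longrightarrow> e j = 0) \<Longrightarrow> (\<And>j. \<exists>z::int. e j = of_int z / of_nat k)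
   \<Longrightarrow> (\<And>j. of_int N \<le> e j) \<Longrightarrow> e \<in> grid k N m"
  unfolding grid_def by blast

lemma grid_lower: "e \<in> grid k N m \<Longrightarrow> of_int N \<le> e j"
  unfolding grid_def by blast

lemma grid_vanishes: "e \<in> grid k N m \<Longrightarrow> m \<le> j \<Longrightarrow> e j = 0"
  unfolding grid_def by blast

lemma grid_denom: "e \<in> grid k N m \<Longrightarrow> \<exists>z::int. e j = of_int z / of_nat k"
  unfolding grid_def by blast

lemma grid_mono: assumes "k > 0" "k' > 0" "k dvd k'" "N' \<le> N" "m \<le> m'"
  shows "grid k N m \<subseteq> grid k' N' m'"
proof
  fix e assume e: "e \<in> grid k N m"
  obtain t where t: "k' = k * t" using assms(3) by auto
  show "e \<in> grid k' N' m'"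
  proof (rule gridI)
    fix j
    obtain z :: int where "e j = of_int z / of_nat k" using grid_denom[OF e] by blast
    then have "e j = of_int (z * int t) / of_nat k'"
      using t assms(1,2) by (simp add: field_simps)
    then show "\<exists>z::int. e j = of_int z / of_nat k'" by blast
    show "of_int N' \<le> e j" using grid_lower[OF e, of j] assms(4) by linarith
  qed (use e assms(5) grid_vanishes in auto)
qed

lemma is_mpuiseux_common_grid:
  assumes "finite C" "\<forall>c\<in>C. is_mpuiseux c"
  shows "\<exists>k>0. \<exists>N m. \<forall>c\<in>C. {e. c e \<noteq> 0} \<subseteq> grid k N m"
  using assms
proof (induction C rule: finite_induct)
  case empty then show ?case by (auto intro: exI[of _ 1])
next
  case (insert c C)
  then obtain k N m where k: "k > 0" "\<forall>d\<in>C. {e. d e \<noteq> 0} \<subseteq> grid k N m" by auto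
  obtain k' N' m' where k': "k' > 0" "{e. c e \<noteq> 0} \<subseteq> grid k' N' m'"
    using insert.prems unfolding is_mpuiseux_def by auto
  have "grid k N m \<subseteq> grid (k * k') (min N N') (max m m')"
    "grid k' N' m' \<subseteq> grid (k * k') (min N N') (max m m')"
    by (rule grid_mono; use k(1) k'(1) in simp)+
  then have "\<forall>d\<in>insert c C. {e. d e \<noteq> 0} \<subseteq> grid (k * k') (min N N') (max m m')"
    using k(2) k'(2) by blast
  moreover have "k * k' > 0" using k(1) k'(1) by simp
  ultimately show ?case by blast
qed

lemma grid_add: assumes "u \<in> grid k N m" "v \<in> grid k N m" shows "u + v \<in> grid k (2 * N) m"
proof (rule gridI)
  fix j
  obtain z1 z2 :: int where "u j = of_int z1 / of_nat k" "v j = of_int z2 / of_nat k"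
    using grid_denom[OF assms(1)] grid_denom[OF assms(2)] by blast
  then have "(u + v) j = of_int (z1 + z2) / of_nat k" by (simp add: add_divide_distrib)
  then show "\<exists>z::int. (u + v) j = of_int z / of_nat k" by blast
  show "of_int (2 * N) \<le> (u + v) j"
    using grid_lower[OF assms(1), of j] grid_lower[OF assms(2), of j] by simp
qed (simp add: grid_vanishes[OF assms(1)] grid_vanishes[OF assms(2)])

lemma grid_box_finite: assumes "k > 0" shows "finite {u \<in> grid k N m. \<forall>j. u j \<le> h j}"
proof -
  let ?B = "{u \<in> grid k N m. \<forall>j. u j \<le> h j}"
  let ?Q = "\<Union>j<m. (\<lambda>z. of_int z / of_nat k :: rat) ` {N * int k .. \<lceil>h j * of_nat k\<rceil>}"
  have inj: "inj_on (\<lambda>u. map u [0..<m]) ?B"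
  proof (rule inj_onI, rule ext)
    fix u v j assume u: "u \<in> ?B" and v: "v \<in> ?B" and eq: "map u [0..<m] = map v [0..<m]"
    show "u j = v j"
      using eq grid_vanishes[of u k N m j] grid_vanishes[of v k N m j] u v
      by (cases "j < m") (auto simp: map_eq_conv)
  qed
  have "(\<lambda>u. map u [0..<m]) ` ?B \<subseteq> {xs. set xs \<subseteq> ?Q \<and> length xs = m}"
  proof safe
    fix u x assume u: "u \<in> grid k N m" "\<forall>j. u j \<le> h j" and x: "x \<in> set (map u [0..<m])"
    then obtain j where j: "j < m" "x = u j" by auto
    obtain z :: int where z: "u j = of_int z / of_nat k" using grid_denom[OF u(1)] by blast
    have k: "(0::rat) < of_nat k" using assms by simp
    have "of_int N * of_nat k \<le> (of_int z :: rat)"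
      using grid_lower[OF u(1), of j] z k by (simp add: field_simps)
    then have lo: "N * int k \<le> z" by (metis of_int_le_iff of_int_mult of_int_of_nat_eq)
    have "(of_int z :: rat) = u j * of_nat k" using z k by simp
    also have "\<dots> \<le> h j * of_nat k" using u(2) k by (simp add: mult_right_mono)
    finally have "(of_int z :: rat) \<le> h j * of_nat k" .
    then have hi: "z \<le> \<lceil>h j * of_nat k\<rceil>" by (meson le_of_int_ceiling order_trans of_int_le_iff)
    show "x \<in> ?Q" using j z lo hi by (auto intro!: rev_image_eqI[of z])
  qed auto
  then have "finite ((\<lambda>u. map u [0..<m]) ` ?B)"
    by (rule finite_subset) (auto intro: finite_lists_length_eq)
  then show ?thesis using finite_imageD[OF _ inj] by blast
qed

definition mser_one :: mser where "mser_one = (\<lambda>e. if e = 0 then 1 else 0)"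

lemma is_mpuiseux_zero: "is_mpuiseux (\<lambda>e. 0)"
  unfolding is_mpuiseux_def by auto

lemma is_mpuiseux_one: "is_mpuiseux mser_one"
  unfolding is_mpuiseux_def mser_one_def grid_def
  by (intro exI[of _ 1] conjI exI[of _ 0]) (auto intro!: exI[of _ 0])

lemma is_mpuiseux_add: assumes "is_mpuiseux c" "is_mpuiseux d" shows "is_mpuiseux (c + d)"
proof -
  obtain k N m where "k > 0" "{e. c e \<noteq> 0} \<subseteq> grid k N m" "{e. d e \<noteq> 0} \<subseteq> grid k N m"
    using is_mpuiseux_common_grid[of "{c, d}"] assms by auto
  moreover have "{e. (c + d) e \<noteq> 0} \<subseteq> {e. c e \<noteq> 0} \<union> {e. d e \<noteq> 0}" by auto
  ultimately show ?thesis unfolding is_mpuiseux_def by blast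
qed

lemma is_mpuiseux_uminus: "is_mpuiseux c \<Longrightarrow> is_mpuiseux (- c)"
  unfolding is_mpuiseux_def by auto

lemma is_mpuiseux_diff: "is_mpuiseux c \<Longrightarrow> is_mpuiseux d \<Longrightarrow> is_mpuiseux (c - d)"
  using is_mpuiseux_add[of c "- d"] is_mpuiseux_uminus[of d] by simp

lemma mser_mult_terms_finite:
  assumes "is_mpuiseux c" "is_mpuiseux d" shows "finite {u. c u * d (e - u) \<noteq> 0}"
proof -
  obtain k N m where k: "k > 0" "{e. c e \<noteq> 0} \<subseteq> grid k N m" "{e. d e \<noteq> 0} \<subseteq> grid k N m"
    using is_mpuiseux_common_grid[of "{c, d}"] assms by auto
  show ?thesis
  proof (rule finite_subset[OF _ grid_box_finite[OF k(1), of N m "\<lambda>j. e j - of_int N"]], safe)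
    fix u assume "c u * d (e - u) \<noteq> 0"
    then have "u \<in> grid k N m" "e - u \<in> grid k N m" using k by auto
    then show "u \<in> grid k N m" "u j \<le> e j - of_int N" for j
      using grid_lower[of "e - u" k N m j] by auto
  qed
qed

lemma is_mpuiseux_mult: assumes "is_mpuiseux c" "is_mpuiseux d" shows "is_mpuiseux (mser_mult c d)"
proof -
  obtain k N m where k: "k > 0" "{e. c e \<noteq> 0} \<subseteq> grid k N m" "{e. d e \<noteq> 0} \<subseteq> grid k N m"
    using is_mpuiseux_common_grid[of "{c, d}"] assms by auto
  have "{e. mser_mult c d e \<noteq> 0} \<subseteq> grid k (2 * N) m"
  proof safe
    fix e assume "mser_mult c d e \<noteq> 0"
    then obtain u where "c u * d (e - u) \<noteq> 0"
      unfolding mser_mult_supp_sum using supp_sum_nonzero_imp by blast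
    then have "u \<in> grid k N m" "e - u \<in> grid k N m" using k by auto
    from grid_add[OF this] show "e \<in> grid k (2 * N) m" by simp
  qed
  then show ?thesis unfolding is_mpuiseux_def using k by blast
qed

lemma mser_mult_commute: "mser_mult c d = mser_mult d c"
proof
  fix e
  have "bij (\<lambda>v. e - v :: expo)" by (rule bij_betw_byWitness[of _ "\<lambda>v. e - v"]) auto
  from supp_sum_reindex_bij[OF this, of "\<lambda>u. c u * d (e - u)"]
  show "mser_mult c d e = mser_mult d c e" unfolding mser_mult_supp_sum by (simp add: mult.commute)
qed

lemma mser_mult_assoc:
  assumes "is_mpuiseux c" "is_mpuiseux d" "is_mpuiseux f"
  shows "mser_mult (mser_mult c d) f = mser_mult c (mser_mult d f)"
proof
  fix e
  obtain k N m where k: "k > 0" "{e. c e \<noteq> 0} \<subseteq> grid k N m" "{e. d e \<noteq> 0} \<subseteq> grid k N m"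
     "{e. f e \<noteq> 0} \<subseteq> grid k N m"
    using is_mpuiseux_common_grid[of "{c, d, f}"] assms by auto
  let ?F = "\<lambda>w u. c u * d (w - u) * f (e - w)"
  have "{(w, u). ?F w u \<noteq> 0} \<subseteq> {w \<in> grid k (2 * N) m. \<forall>j. w j \<le> e j - of_int N}
      \<times> {u \<in> grid k N m. \<forall>j. u j \<le> e j - 2 * of_int N}"
  proof safe
    fix w u assume "?F w u \<noteq> 0"
    then have "u \<in> grid k N m" "w - u \<in> grid k N m" "e - w \<in> grid k N m" using k by auto
    then show "w \<in> grid k (2 * N) m" "u \<in> grid k N m"
      "w j \<le> e j - of_int N" "u j \<le> e j - 2 * of_int N" for j
      using grid_add[of u k N m "w - u"] grid_lower[of "e - w" k N m j] grid_lower[of "w - u" k N m j]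
      by auto
  qed
  then have fin: "finite {(w, u). ?F w u \<noteq> 0}"
    by (rule finite_subset) (intro finite_cartesian_product grid_box_finite k(1))
  have shift: "supp_sum (\<lambda>w. d (w - u) * f (e - w)) = supp_sum (\<lambda>v. d v * f (e - u - v))" for u
  proof -
    have "bij (\<lambda>v. v + u :: expo)" by (rule bij_betw_byWitness[of _ "\<lambda>v. v - u"]) auto
    from supp_sum_reindex_bij[OF this, of "\<lambda>w. d (w - u) * f (e - w)"] show ?thesis
      by (simp add: algebra_simps)
  qed
  have "mser_mult (mser_mult c d) f e = supp_sum (\<lambda>w. supp_sum (\<lambda>u. ?F w u))"
    unfolding mser_mult_supp_sum supp_sum_multc by simp
  also have "\<dots> = supp_sum (\<lambda>u. supp_sum (\<lambda>w. ?F w u))" by (rule supp_sum_swap[OF fin])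
  also have "\<dots> = supp_sum (\<lambda>u. c u * supp_sum (\<lambda>v. d v * f (e - u - v)))"
    unfolding supp_sum_cmult[symmetric] shift[symmetric] by (simp add: mult.assoc)
  also have "\<dots> = mser_mult c (mser_mult d f) e"
    unfolding mser_mult_supp_sum by simp
  finally show "mser_mult (mser_mult c d) f e = mser_mult c (mser_mult d f) e" .
qed

lemma mser_mult_add_right:
  assumes "is_mpuiseux c" "is_mpuiseux d" "is_mpuiseux f"
  shows "mser_mult c (d + f) = mser_mult c d + mser_mult c f"
proof
  fix e
  have "mser_mult c (d + f) e = supp_sum (\<lambda>u. c u * d (e - u) + c u * f (e - u))"
    unfolding mser_mult_supp_sum by (simp add: algebra_simps)
  also have "\<dots> = mser_mult c d e + mser_mult c f e"
    unfolding mser_mult_supp_sum using assms by (intro supp_sum_add mser_mult_terms_finite)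
  finally show "mser_mult c (d + f) e = (mser_mult c d + mser_mult c f) e" by simp
qed

lemma mser_one_mult: "mser_mult mser_one c = c"
  by (rule ext, unfold mser_mult_supp_sum, subst supp_sum_singleton[of _ 0]) (auto simp: mser_one_def)

definition lex_less :: "expo \<Rightarrow> expo \<Rightarrow> bool" where
  "lex_less u v \<longleftrightarrow> (\<exists>j. (\<forall>i<j. u i = v i) \<and> u j < v j)"

lemma lex_less_irrefl: "\<not> lex_less u u"
  unfolding lex_less_def by auto

lemma lex_less_add: assumes "lex_less a b" "lex_less c d \<or> c = d" shows "lex_less (a + c) (b + d)"
proof -
  obtain j1 where j1: "\<forall>i<j1. a i = b i" "a j1 < b j1" using assms(1) unfolding lex_less_def by blast
  show ?thesis
  proof (cases "c = d")
    case True then show ?thesis using j1 unfolding lex_less_def by (intro exI[of _ j1]) auto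
  next
    case False
    then obtain j2 where j2: "\<forall>i<j2. c i = d i" "c j2 < d j2"
      using assms(2) unfolding lex_less_def by blast
    have "(a + c) (min j1 j2) < (b + d) (min j1 j2)"
      using j1 j2 by (cases j1 j2 rule: linorder_cases) (auto simp: min_def add_strict_mono)
    then show ?thesis using j1 j2 unfolding lex_less_def by (intro exI[of _ "min j1 j2"]) auto
  qed
qed

text \<open>On a grid each coordinate ranges over a copy of \<open>\<nat>\<close>, so the lexicographic order is a
  well-order there.\<close>

definition grid_index :: "nat \<Rightarrow> int \<Rightarrow> nat \<Rightarrow> expo \<Rightarrow> nat" where
  "grid_index k N r u = nat \<lfloor>(u r - of_int N) * of_nat k\<rfloor>"

lemma grid_index_eq: assumes "u \<in> grid k N m" "k > 0"
  shows "of_nat (grid_index k N r u) = (u r - of_int N) * of_nat k"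
proof -
  obtain z :: int where z: "u r = of_int z / of_nat k" using grid_denom[OF assms(1)] by blast
  have eq: "(u r - of_int N) * of_nat k = of_int (z - N * int k)" using z assms(2) by (simp add: field_simps)
  have "of_int N \<le> u r" using grid_lower[OF assms(1)] .
  then have "z - N * int k \<ge> 0" using assms(2) eq
    by (metis diff_ge_0_iff_ge mult_nonneg_nonneg of_int_0_le_iff of_nat_0_le_iff)
  then show ?thesis unfolding grid_index_def eq
    by (metis floor_of_int of_int_of_nat_eq int_nat_eq of_int_eq_iff nat_0_le)
qed

lemma grid_index_le_imp:
  assumes "u \<in> grid k N m" "v \<in> grid k N m" "k > 0" "grid_index k N r u \<le> grid_index k N r v"
  shows "u r \<le> v r"
proof -
  have "(u r - of_int N) * of_nat k \<le> (v r - of_int N) * of_nat k"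
    using assms(4) grid_index_eq[OF assms(1,3)] grid_index_eq[OF assms(2,3)] by (metis of_nat_mono)
  then show ?thesis using assms(3) by simp
qed

lemma grid_lex_min_prefix: assumes "k > 0" "u' \<in> S" "S \<subseteq> grid k N m"
  shows "\<exists>u0\<in>S. \<forall>u\<in>S. (\<forall>i<r. u i = u0 i) \<or> (\<exists>j<r. (\<forall>i<j. u0 i = u i) \<and> u0 j < u j)"
proof (induction r)
  case 0 then show ?case using assms(2) by blast
next
  case (Suc r)
  then obtain u0 where u0: "u0 \<in> S"
    "\<forall>u\<in>S. (\<forall>i<r. u i = u0 i) \<or> (\<exists>j<r. (\<forall>i<j. u0 i = u i) \<and> u0 j < u j)"
    by blast
  let ?S' = "{u\<in>S. \<forall>i<r. u i = u0 i}"
  obtain u1 where u1: "u1 \<in> ?S'" "\<forall>y. y \<in> ?S' \<longrightarrow> grid_index k N r u1 \<le> grid_index k N r y"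
    using ex_has_least_nat[of "\<lambda>u. u \<in> ?S'" u0 "grid_index k N r"] u0(1) by auto
  show ?case
  proof (intro bexI[of _ u1] ballI)
    fix u assume u: "u \<in> S"
    show "(\<forall>i<Suc r. u i = u1 i) \<or> (\<exists>j<Suc r. (\<forall>i<j. u1 i = u i) \<and> u1 j < u j)"
    proof (cases "u \<in> ?S'")
      case True
      then have "u1 r \<le> u r" using grid_index_le_imp[of u1 k N m u r] u1 assms by auto
      then show ?thesis using u1(1) True
        by (cases "u1 r = u r") (auto simp: less_Suc_eq intro!: exI[of _ r])
    next
      case False
      then obtain j where j: "j < r" "\<forall>i<j. u0 i = u i" "u0 j < u j" using u0(2) u by auto
      then show ?thesis using u1(1) by (intro disjI2 exI[of _ j]) auto
    qed
  qed (use u1 in auto)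
qed

lemma grid_lex_min: assumes "k > 0" "u' \<in> S" "S \<subseteq> grid k N m"
  shows "\<exists>u0\<in>S. \<forall>u\<in>S. u \<noteq> u0 \<longrightarrow> lex_less u0 u"
proof -
  obtain u0 where u0: "u0 \<in> S"
    "\<forall>u\<in>S. (\<forall>i<m. u i = u0 i) \<or> (\<exists>j<m. (\<forall>i<j. u0 i = u i) \<and> u0 j < u j)"
    using grid_lex_min_prefix[OF assms, of m] by blast
  have "u = u0" if "u \<in> S" "\<forall>i<m. u i = u0 i" for u
    using that u0(1) assms(3) grid_vanishes[of u k N m] grid_vanishes[of u0 k N m]
    by (metis ext not_le subsetD)
  then show ?thesis using u0 unfolding lex_less_def by blast
qed

lemma mser_mult_nonzero:
  assumes "is_mpuiseux c" "is_mpuiseux d" "c \<noteq> (\<lambda>e. 0)" "d \<noteq> (\<lambda>e. 0)"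
  shows "mser_mult c d \<noteq> (\<lambda>e. 0)"
proof -
  obtain k N m where k: "k > 0" "{e. c e \<noteq> 0} \<subseteq> grid k N m" "{e. d e \<noteq> 0} \<subseteq> grid k N m"
    using is_mpuiseux_common_grid[of "{c, d}"] assms(1,2) by auto
  obtain u0 where u0: "c u0 \<noteq> 0" "\<forall>u. c u \<noteq> 0 \<longrightarrow> u \<noteq> u0 \<longrightarrow> lex_less u0 u"
    using grid_lex_min[OF k(1) _ k(2)] assms(3) by fastforce
  obtain v0 where v0: "d v0 \<noteq> 0" "\<forall>v. d v \<noteq> 0 \<longrightarrow> v \<noteq> v0 \<longrightarrow> lex_less v0 v"
    using grid_lex_min[OF k(1) _ k(3)] assms(4) by fastforce
  have "mser_mult c d (u0 + v0) = c u0 * d (u0 + v0 - u0)"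
    unfolding mser_mult_supp_sum
  proof (rule supp_sum_singleton, safe)
    fix u assume nz: "c u * d (u0 + v0 - u) \<noteq> 0"
    show "u = u0"
    proof (rule ccontr)
      assume ne: "u \<noteq> u0"
      let ?v = "u0 + v0 - u"
      have "?v \<noteq> v0" using ne by (auto simp: algebra_simps)
      then have "lex_less u0 u" "lex_less v0 ?v" using u0(2) v0(2) nz ne by auto
      then have "lex_less (u0 + v0) (u + ?v)" using lex_less_add by blast
      then show False using lex_less_irrefl by (simp add: algebra_simps)
    qed
  qed
  also have "\<dots> \<noteq> 0" using u0(1) v0(1) by simp
  finally show ?thesis by metis
qed

typedef mpuiseux = "{c. is_mpuiseux c}"
  using is_mpuiseux_zero by blast

setup_lifting type_definition_mpuiseux

instantiation mpuiseux :: comm_ring_1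
begin

lift_definition zero_mpuiseux :: mpuiseux is "\<lambda>e. 0" by (rule is_mpuiseux_zero)
lift_definition one_mpuiseux :: mpuiseux is mser_one by (rule is_mpuiseux_one)
lift_definition plus_mpuiseux :: "mpuiseux \<Rightarrow> mpuiseux \<Rightarrow> mpuiseux" is "(+)"
  by (rule is_mpuiseux_add)
lift_definition uminus_mpuiseux :: "mpuiseux \<Rightarrow> mpuiseux" is uminus
  by (rule is_mpuiseux_uminus)
lift_definition minus_mpuiseux :: "mpuiseux \<Rightarrow> mpuiseux \<Rightarrow> mpuiseux" is "(-)"
  by (rule is_mpuiseux_diff)
lift_definition times_mpuiseux :: "mpuiseux \<Rightarrow> mpuiseux \<Rightarrow> mpuiseux" is mser_mult
  by (rule is_mpuiseux_mult)

instance
proof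
  fix a b c :: mpuiseux
  show "a * b * c = a * (b * c)" by transfer (rule mser_mult_assoc)
  show "a * b = b * a" by transfer (rule mser_mult_commute)
  show "1 * a = a" by transfer (rule mser_one_mult)
  show "a + b + c = a + (b + c)" by transfer (rule add.assoc)
  show "a + b = b + a" by transfer (rule add.commute)
  show "0 + a = a" by transfer (simp add: fun_eq_iff)
  show "- a + a = 0" by transfer (simp add: fun_eq_iff)
  show "a - b = a + - b" by transfer simp
  show "(a + b) * c = a * c + b * c"
    by transfer (metis mser_mult_commute mser_mult_add_right)
  show "(0::mpuiseux) \<noteq> 1" by transfer (auto simp: mser_one_def fun_eq_iff)
qed

end

instance mpuiseux :: idom
  by standard (transfer, use mser_mult_nonzero in blast)

lemma is_mpuiseux_Rep: "is_mpuiseux (Rep_mpuiseux x)"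
  using Rep_mpuiseux by simp

lemma Abs_mpuiseux_eqI: "Rep_mpuiseux x = c \<Longrightarrow> Abs_mpuiseux c = x"
  using Rep_mpuiseux_inverse by blast

lemma Rep_Abs_mpuiseux: "is_mpuiseux c \<Longrightarrow> Rep_mpuiseux (Abs_mpuiseux c) = c"
  by (simp add: Abs_mpuiseux_inverse)

lemma Rep_mpuiseux_sum: "Rep_mpuiseux (sum f I) = (\<lambda>e. \<Sum>i\<in>I. Rep_mpuiseux (f i) e)"
  by (induction I rule: infinite_finite_induct)
     (auto simp: fun_eq_iff zero_mpuiseux.rep_eq plus_mpuiseux.rep_eq)

section \<open>Series in a single variable\<close>

definition in_var :: "nat \<Rightarrow> ser \<Rightarrow> mser" where
  "in_var j f = (\<lambda>e. if (\<forall>i. i \<noteq> j \<longrightarrow> e i = 0) then f (e j) else 0)"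

lemma in_var_mult: "in_var j (ser_mult f g) = mser_mult (in_var j f) (in_var j g)"
proof
  fix e
  let ?P = "\<lambda>e::expo. \<forall>i. i \<noteq> j \<longrightarrow> e i = 0"
  have support: "?P u \<and> ?P (e - u)" if "in_var j f u * in_var j g (e - u) \<noteq> 0" for u
    using that unfolding in_var_def by (auto split: if_splits)
  show "in_var j (ser_mult f g) e = mser_mult (in_var j f) (in_var j g) e"
  proof (cases "?P e")
    case True
    have "mser_mult (in_var j f) (in_var j g) e
        = supp_sum (\<lambda>r. in_var j f (0(j := r)) * in_var j g (e - 0(j := r)))"
      unfolding mser_mult_supp_sum
    proof (rule supp_sum_reindex[symmetric])
      show "inj (\<lambda>r. (0::expo)(j := r))" by (rule injI) (metis fun_upd_same)
      show "{u. in_var j f u * in_var j g (e - u) \<noteq> 0} \<subseteq> range (\<lambda>r. 0(j := r))"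
        using support by (fastforce simp: fun_eq_iff image_iff intro: exI[of _ "_ j"])
    qed
    also have "\<dots> = in_var j (ser_mult f g) e"
      using True unfolding in_var_def ser_mult_supp_sum by simp
    finally show ?thesis ..
  next
    case False
    have "in_var j f u * in_var j g (e - u) = 0" for u
    proof (rule ccontr)
      assume "in_var j f u * in_var j g (e - u) \<noteq> 0"
      then have "?P u" "?P (e - u)" using support by blast+
      then show False using False by auto
    qed
    then have "mser_mult (in_var j f) (in_var j g) e = 0"
      unfolding mser_mult_supp_sum by (simp add: supp_sum_def)
    then show ?thesis unfolding in_var_def if_not_P[OF False] by simp
  qed
qed

lemma in_var_diff: "in_var j (ser_diff f g) = in_var j f - in_var j g"
  unfolding in_var_def ser_diff_def by (auto simp: fun_eq_iff)

lemma in_var_zero: "in_var j ser_zero = (\<lambda>e. 0)"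
  unfolding in_var_def ser_zero_def by (auto simp: fun_eq_iff)

lemma in_var_one: "in_var j ser_one = mser_one"
  unfolding in_var_def ser_one_def mser_one_def by (auto simp: fun_eq_iff)

lemma in_var_sum: "in_var j (\<lambda>q. \<Sum>i\<in>I. F i q) = (\<lambda>e. \<Sum>i\<in>I. in_var j (F i) e)"
proof
  fix e show "in_var j (\<lambda>q. \<Sum>i\<in>I. F i q) e = (\<Sum>i\<in>I. in_var j (F i) e)"
  proof (cases "\<forall>i. i \<noteq> j \<longrightarrow> e i = 0")
    case False then show ?thesis unfolding in_var_def if_not_P[OF False] by simp
  qed (simp add: in_var_def)
qed

lemma in_var_cmult: "in_var j (\<lambda>q. c * f q) = (\<lambda>e. c * in_var j f e)"
  unfolding in_var_def by (auto simp: fun_eq_iff)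

lemma is_mpuiseux_in_var: assumes "f \<in> puiseux" shows "is_mpuiseux (in_var j f)"
proof -
  obtain k N where k: "k > 0" "\<forall>q. f q \<noteq> 0 \<longrightarrow> (\<exists>z::int. q = of_int z / of_nat k) \<and> of_int N \<le> q"
    using assms unfolding puiseux_def by blast
  have "{e. in_var j f e \<noteq> 0} \<subseteq> grid k (min N 0) (Suc j)"
  proof safe
    fix e assume "in_var j f e \<noteq> 0"
    then have z: "\<forall>i. i \<noteq> j \<longrightarrow> e i = 0" and fe: "f (e j) \<noteq> 0"
      unfolding in_var_def by (auto split: if_splits)
    show "e \<in> grid k (min N 0) (Suc j)"
    proof (rule gridI)
      fix i show "\<exists>z::int. e i = of_int z / of_nat k"
        using z k(2) fe by (cases "i = j") (auto intro: exI[of _ 0])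
      show "of_int (min N 0) \<le> e i"
        using z k(2) fe by (cases "i = j") (auto intro: order_trans[of _ "of_int N"])
    qed (use z in auto)
  qed
  then show ?thesis unfolding is_mpuiseux_def using k(1) by blast
qed

lemma laurent_poly_puiseux: assumes "f \<in> laurent_poly" shows "f \<in> puiseux"
proof -
  let ?S = "{q. f q \<noteq> 0}"
  have fin: "finite ?S" and int: "\<forall>q\<in>?S. q \<in> \<int>" using assms unfolding laurent_poly_def by auto
  define N where "N = (if ?S = {} then 0 else \<lfloor>Min ?S\<rfloor>)"
  have "(\<exists>z::int. q = of_int z / of_nat 1) \<and> of_int N \<le> q" if "f q \<noteq> 0" for q
  proof
    show "\<exists>z::int. q = of_int z / of_nat 1" using int that by (auto elim: Ints_cases)
    have "Min ?S \<le> q" using that fin by simp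
    then show "of_int N \<le> q" unfolding N_def using that by (auto intro: order_trans[OF of_int_floor_le])
  qed
  then show ?thesis unfolding puiseux_def by (intro CollectI exI[of _ 1]) auto
qed

definition puiseux_var :: "nat \<Rightarrow> ser \<Rightarrow> mpuiseux" where
  "puiseux_var j f = Abs_mpuiseux (in_var j f)"

lemma Rep_puiseux_var: "f \<in> puiseux \<Longrightarrow> Rep_mpuiseux (puiseux_var j f) = in_var j f"
  unfolding puiseux_var_def by (simp add: Rep_Abs_mpuiseux is_mpuiseux_in_var)

lemma puiseux_var_diff:
  assumes "f \<in> puiseux" "g \<in> puiseux"
  shows "puiseux_var j (ser_diff f g) = puiseux_var j f - puiseux_var j g"
  unfolding puiseux_var_def[of j "ser_diff f g"] using assms
  by (intro Abs_mpuiseux_eqI) (simp add: minus_mpuiseux.rep_eq Rep_puiseux_var in_var_diff)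

lemma constant_puiseux: "(\<lambda>q. if q = 0 then r else 0) \<in> puiseux"
  unfolding puiseux_def by (intro CollectI exI[of _ 1] conjI exI[of _ 0]) (auto intro: exI[of _ 0])

lemma puiseux_var_constant_inj: "inj (\<lambda>r. puiseux_var j (\<lambda>q. if q = 0 then r else 0))"
proof (rule injI)
  fix r s assume "puiseux_var j (\<lambda>q. if q = 0 then r else 0) = puiseux_var j (\<lambda>q. if q = 0 then s else 0)"
  then have "Rep_mpuiseux (puiseux_var j (\<lambda>q. if q = 0 then r else 0)) 0
      = Rep_mpuiseux (puiseux_var j (\<lambda>q. if q = 0 then s else 0)) 0" by simp
  then show "r = s" by (simp add: Rep_puiseux_var[OF constant_puiseux] in_var_def)
qed

lemma det_mat_Suc:
  "det (mat (Suc k) (Suc k) (\<lambda>(a, b). M a b))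
    = (\<Sum>j<Suc k. (-1) ^ j * (M 0 j * det (mat k k (\<lambda>(a, b). minor M 0 j a b))))"
proof -
  let ?A = "mat (Suc k) (Suc k) (\<lambda>(a, b). M a b)"
  have del: "mat_delete ?A 0 j = mat k k (\<lambda>(a, b). minor M 0 j a b)" if "j < Suc k" for j
    by (rule eq_matI) (use that in \<open>auto simp: mat_delete_def minor_def\<close>)
  have "det ?A = (\<Sum>j<Suc k. ?A $$ (0, j) * cofactor ?A 0 j)"
    by (rule laplace_expansion_row) auto
  also have "\<dots> = (\<Sum>j<Suc k. (-1) ^ j * (M 0 j * det (mat k k (\<lambda>(a, b). minor M 0 j a b))))"
    by (rule sum.cong) (auto simp: cofactor_def del)
  finally show ?thesis .
qed

lemma in_var_ser_det:
  assumes "\<forall>a<k. \<forall>b<k. is_mpuiseux (in_var l (M a b))"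
  shows "in_var l (ser_det k M) = Rep_mpuiseux (det (mat k k (\<lambda>(a, b). Abs_mpuiseux (in_var l (M a b)))))"
  using assms
proof (induction k arbitrary: M)
  case 0 then show ?case by (simp add: in_var_one one_mpuiseux.rep_eq)
next
  case (Suc k)
  let ?MA = "\<lambda>a b. Abs_mpuiseux (in_var l (M a b))"
  have minor_ok: "\<forall>a<k. \<forall>b<k. is_mpuiseux (in_var l (minor M 0 j a b))" for j
    using Suc.prems unfolding minor_def by auto
  have entry: "Rep_mpuiseux (?MA 0 j * det (mat k k (\<lambda>(a, b). minor ?MA 0 j a b)))
      = mser_mult (in_var l (M 0 j)) (in_var l (ser_det k (minor M 0 j)))" if "j < Suc k" for j
  proof -
    have "minor ?MA 0 j = (\<lambda>a b. Abs_mpuiseux (in_var l (minor M 0 j a b)))"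
      unfolding minor_def by simp
    then show ?thesis
      using Suc.prems that by (simp add: times_mpuiseux.rep_eq Rep_Abs_mpuiseux Suc.IH[OF minor_ok])
  qed
  have sign: "Rep_mpuiseux ((-1) ^ j * x) = (\<lambda>e. (-1) ^ j * Rep_mpuiseux x e)" for j x
    by (cases "even j") (simp_all add: fun_eq_iff uminus_mpuiseux.rep_eq)
  have "Rep_mpuiseux (det (mat (Suc k) (Suc k) (\<lambda>(a, b). ?MA a b)))
      = (\<lambda>e. \<Sum>j<Suc k. (-1) ^ j * mser_mult (in_var l (M 0 j)) (in_var l (ser_det k (minor M 0 j))) e)"
    unfolding det_mat_Suc Rep_mpuiseux_sum sign by (intro ext sum.cong refl) (simp add: entry)
  also have "\<dots> = in_var l (ser_det (Suc k) M)"
    by (simp only: ser_det.simps in_var_sum in_var_cmult in_var_mult)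
  finally show ?case ..
qed

lemma poly_char_poly_mat:
  "poly (char_poly (mat N N (\<lambda>(i, j). M i j))) x
     = det (mat N N (\<lambda>(i, j). (if i = j then x else 0) - M i j))"
  unfolding char_poly_def by (rule poly_det_cong[of _ N]) (auto simp: char_poly_matrix_def)

lemma tens_0: "tens 0 fs = mser_one"
  unfolding tens_def mser_one_def by (auto simp: fun_eq_iff)

lemma tens_Suc: "tens (Suc m) fs = mser_mult (tens m fs) (in_var m (fs m))"
proof
  fix e :: expo
  let ?u0 = "e(m := 0)"
  have only_u0: "u = ?u0 \<and> (\<forall>j\<ge>Suc m. e j = 0)" if "tens m fs u * in_var m (fs m) (e - u) \<noteq> 0" for u
  proof -
    from that have u: "\<forall>j\<ge>m. u j = 0" and e: "\<forall>i. i \<noteq> m \<longrightarrow> e i = u i"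
      unfolding tens_def in_var_def by (auto split: if_splits)
    have "u = ?u0"
    proof
      fix i show "u i = ?u0 i" using u e by (cases "i = m") auto
    qed
    moreover have "\<forall>j\<ge>Suc m. e j = 0" using u e by simp
    ultimately show ?thesis ..
  qed
  have "mser_mult (tens m fs) (in_var m (fs m)) e = tens m fs ?u0 * in_var m (fs m) (e - ?u0)"
    unfolding mser_mult_supp_sum by (rule supp_sum_singleton) (use only_u0 in blast)
  also have "\<dots> = tens (Suc m) fs e"
  proof (cases "\<forall>j\<ge>Suc m. e j = 0")
    case True
    have "(\<Prod>j<m. fs j (?u0 j)) = (\<Prod>j<m. fs j (e j))" by (rule prod.cong) auto
    then show ?thesis using True unfolding tens_def in_var_def by (auto simp: Suc_le_eq)
  next
    case False
    then have "tens m fs ?u0 * in_var m (fs m) (e - ?u0) = 0" using only_u0[of ?u0] by blast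
    moreover have "tens (Suc m) fs e = 0" using False unfolding tens_def by auto
    ultimately show ?thesis by simp
  qed
  finally show "tens (Suc m) fs e = mser_mult (tens m fs) (in_var m (fs m)) e" ..
qed

lemma tens_eq_prod_puiseux_var:
  "\<forall>j<m. fs j \<in> puiseux \<Longrightarrow> tens m fs = Rep_mpuiseux (\<Prod>j<m. puiseux_var j (fs j))"
  by (induction m) (simp_all add: tens_0 one_mpuiseux.rep_eq tens_Suc times_mpuiseux.rep_eq Rep_puiseux_var)

lemma tens_cong: "(\<And>j. j < m \<Longrightarrow> fs j = gs j) \<Longrightarrow> tens m fs = tens m gs"
  unfolding tens_def by (auto simp: fun_eq_iff intro!: prod.cong)

lemma is_mpuiseux_Em: assumes "c \<in> Em m" shows "is_mpuiseux c"
proof -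
  obtain L where L: "\<forall>fs\<in>set L. \<forall>j<m. fs j \<in> puiseux" "c = (\<lambda>e. \<Sum>fs\<leftarrow>L. tens m fs e)"
    using assms unfolding Em_def by blast
  have "is_mpuiseux (\<lambda>e. \<Sum>fs\<leftarrow>L. tens m fs e)" using L(1)
  proof (induction L)
    case Nil then show ?case by (simp add: is_mpuiseux_zero)
  next
    case (Cons fs L)
    have "(\<lambda>e. \<Sum>fs'\<leftarrow>fs # L. tens m fs' e) = tens m fs + (\<lambda>e. \<Sum>fs'\<leftarrow>L. tens m fs' e)"
      by (simp add: fun_eq_iff)
    moreover have "is_mpuiseux (tens m fs)"
      using Cons.prems tens_eq_prod_puiseux_var[of m fs] Rep_mpuiseux by auto
    ultimately show ?case using Cons by (simp add: is_mpuiseux_add)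
  qed
  then show ?thesis using L(2) by simp
qed

section \<open>Cayley--Hamilton for matrices given by their entries\<close>

text \<open>An \<open>N \<times> N\<close> matrix is a function \<open>nat \<Rightarrow> nat \<Rightarrow> 'a\<close>; products, powers and polynomial
  evaluations vanish outside \<open>{..<N} \<times> {..<N}\<close>.\<close>

definition fmat_mult ::
  "nat \<Rightarrow> (nat \<Rightarrow> nat \<Rightarrow> 'a::comm_ring_1) \<Rightarrow> (nat \<Rightarrow> nat \<Rightarrow> 'a) \<Rightarrow> nat \<Rightarrow> nat \<Rightarrow> 'a" where
  "fmat_mult N B C = (\<lambda>i k. if i < N \<and> k < N then \<Sum>l<N. B i l * C l k else 0)"

definition fmat_one :: "nat \<Rightarrow> nat \<Rightarrow> nat \<Rightarrow> 'a::comm_ring_1" where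
  "fmat_one N = (\<lambda>i j. if i = j \<and> i < N then 1 else 0)"

fun fmat_pow :: "nat \<Rightarrow> (nat \<Rightarrow> nat \<Rightarrow> 'a::comm_ring_1) \<Rightarrow> nat \<Rightarrow> nat \<Rightarrow> nat \<Rightarrow> 'a" where
  "fmat_pow N B 0 = fmat_one N"
| "fmat_pow N B (Suc k) = fmat_mult N (fmat_pow N B k) B"

definition fmat_poly :: "nat \<Rightarrow> 'a::comm_ring_1 poly \<Rightarrow> (nat \<Rightarrow> nat \<Rightarrow> 'a) \<Rightarrow> nat \<Rightarrow> nat \<Rightarrow> 'a" where
  "fmat_poly N p B = fold_coeffs (\<lambda>a M i j. a * fmat_one N i j + fmat_mult N B M i j) p (\<lambda>i j. 0)"

lemma fmat_mult_assoc: "fmat_mult N (fmat_mult N B C) D = fmat_mult N B (fmat_mult N C D)"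
  unfolding fmat_mult_def
  by (auto simp: fun_eq_iff sum_distrib_left sum_distrib_right mult.assoc intro: sum.swap)

lemma fmat_one_commute: "fmat_mult N (fmat_one N) B = fmat_mult N B (fmat_one N)"
  unfolding fmat_mult_def fmat_one_def
  by (auto simp: fun_eq_iff if_distrib[of "\<lambda>x. x * _"] if_distrib[of "\<lambda>x. _ * x"] cong: if_cong)

lemma fmat_mult_cong: "(\<And>i r. i < N \<Longrightarrow> r < N \<Longrightarrow> B i r = B' i r) \<Longrightarrow>
  (\<And>r k. r < N \<Longrightarrow> k < N \<Longrightarrow> C r k = C' r k) \<Longrightarrow> fmat_mult N B C = fmat_mult N B' C'"
  unfolding fmat_mult_def by (auto simp: fun_eq_iff intro!: sum.cong)

lemma fmat_pow_commute: "fmat_mult N B (fmat_pow N B k) = fmat_mult N (fmat_pow N B k) B"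
  by (induction k) (simp_all add: fmat_one_commute, metis fmat_mult_assoc)

lemma fmat_pow_outside: "i \<ge> N \<or> j \<ge> N \<Longrightarrow> fmat_pow N B k i j = 0"
  by (cases k) (auto simp: fmat_one_def fmat_mult_def)

lemma fmat_mult_add_right:
  "fmat_mult N B (\<lambda>i j. C i j + D i j) = (\<lambda>i j. fmat_mult N B C i j + fmat_mult N B D i j)"
  unfolding fmat_mult_def by (auto simp: fun_eq_iff distrib_left sum.distrib)

lemma fmat_mult_diff_left:
  "fmat_mult N (\<lambda>i j. C i j - D i j) B = (\<lambda>i j. fmat_mult N C B i j - fmat_mult N D B i j)"
  unfolding fmat_mult_def by (auto simp: fun_eq_iff left_diff_distrib sum_subtractf)

lemma fmat_mult_cmult_right: "fmat_mult N B (\<lambda>i j. c * C i j) = (\<lambda>i j. c * fmat_mult N B C i j)"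
  unfolding fmat_mult_def by (auto simp: fun_eq_iff sum_distrib_left mult.left_commute)

lemma fmat_mult_zero_right: "fmat_mult N B (\<lambda>i j. 0) = (\<lambda>i j. 0)"
  unfolding fmat_mult_def by (auto simp: fun_eq_iff)

lemma fmat_mult_zero_left: "fmat_mult N (\<lambda>i j. 0) B = (\<lambda>i j. 0)"
  unfolding fmat_mult_def by (auto simp: fun_eq_iff)

lemma fmat_mult_sum_right:
  "fmat_mult N B (\<lambda>i j. \<Sum>k<K. F k i j) = (\<lambda>i j. \<Sum>k<K. fmat_mult N B (F k) i j)"
  unfolding fmat_mult_def by (auto simp: fun_eq_iff sum_distrib_left intro: sum.swap)

lemma fmat_poly_0 [simp]: "fmat_poly N 0 B = (\<lambda>i j. 0)"
  unfolding fmat_poly_def by simp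

lemma fmat_poly_pCons:
  "fmat_poly N (pCons a p) B = (\<lambda>i j. a * fmat_one N i j + fmat_mult N B (fmat_poly N p B) i j)"
  by (cases "p = 0 \<and> a = 0") (auto simp: fmat_mult_zero_right fmat_poly_def)

lemma fmat_poly_1: "fmat_poly N 1 B = fmat_one N"
  unfolding one_pCons fmat_poly_pCons by (simp add: fmat_mult_zero_right)

lemma fmat_poly_add: "fmat_poly N (p + q) B = (\<lambda>i j. fmat_poly N p B i j + fmat_poly N q B i j)"
  by (induction p q rule: poly_induct2) (simp_all add: fmat_poly_pCons fmat_mult_add_right algebra_simps)

lemma fmat_poly_smult: "fmat_poly N (Polynomial.smult c p) B = (\<lambda>i j. c * fmat_poly N p B i j)"
  by (induction p) (simp_all add: fmat_poly_pCons fmat_mult_cmult_right algebra_simps)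

lemma fmat_poly_linear_mult:
  "fmat_poly N ([:- c, 1:] * q) B = (\<lambda>i j. fmat_mult N B (fmat_poly N q B) i j - c * fmat_poly N q B i j)"
proof -
  have "[:- c, 1:] * q = Polynomial.smult (- c) q + pCons 0 q" by simp
  then have "fmat_poly N ([:- c, 1:] * q) B = fmat_poly N (Polynomial.smult (- c) q + pCons 0 q) B"
    by (rule arg_cong)
  then show ?thesis by (simp only: fmat_poly_add fmat_poly_smult fmat_poly_pCons) (simp add: fun_eq_iff)
qed

lemma fmat_poly_eq_sum:
  "degree p < K \<Longrightarrow> fmat_poly N p B = (\<lambda>i j. \<Sum>k<K. coeff p k * fmat_pow N B k i j)"
proof (induction p arbitrary: K)
  case 0 then show ?case by simp
next
  case (pCons a p)
  obtain K' where K: "K = Suc K'" using pCons.prems by (cases K) auto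
  have IH: "fmat_poly N p B = (\<lambda>i j. \<Sum>k<K'. coeff p k * fmat_pow N B k i j)"
    using pCons K by (cases "p = 0") simp_all
  have "fmat_mult N B (fmat_poly N p B) = (\<lambda>i j. \<Sum>k<K'. coeff p k * fmat_pow N B (Suc k) i j)"
    unfolding IH fmat_mult_sum_right fmat_mult_cmult_right by (simp add: fmat_pow_commute)
  then show ?case
    unfolding fmat_poly_pCons K by (simp add: sum.lessThan_Suc_shift del: sum.lessThan_Suc)
qed

lemma char_poly_adjugate_coeff:
  fixes M :: "nat \<Rightarrow> nat \<Rightarrow> 'a::comm_ring_1" and N i j k :: nat
  defines "D \<equiv> adj_mat (char_poly_matrix (mat N N (\<lambda>(i, j). M i j)))"
  assumes "i < N" "j < N"
  shows "coeff (D $$ (i, j) * [:0, 1:]) k - fmat_mult N (\<lambda>i l. coeff (D $$ (i, l)) k) M i j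
       = (if i = j then coeff (char_poly (mat N N (\<lambda>(i, j). M i j))) k else 0)"
proof -
  let ?A = "mat N N (\<lambda>(i, j). M i j)"
  let ?C = "char_poly_matrix ?A"
  have C: "?C \<in> carrier_mat N N" by simp
  have D: "D \<in> carrier_mat N N" unfolding D_def by (rule adj_mat(1)[OF C])
  have "D * ?C = det ?C \<cdot>\<^sub>m 1\<^sub>m N" unfolding D_def by (rule adj_mat(3)[OF C])
  then have adj: "(D * ?C) $$ (i, j) = (if i = j then char_poly ?A else 0)"
    using assms(2,3) by (simp add: char_poly_def)
  have "(D * ?C) $$ (i, j) = (\<Sum>l<N. D $$ (i, l) * ?C $$ (l, j))"
    using assms(2,3) by (simp add: carrier_matD[OF C] carrier_matD[OF D] scalar_prod_def lessThan_atLeast0)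
  also have "\<dots> = (\<Sum>l<N. (if l = j then D $$ (i, j) * [:0, 1:] else 0) + D $$ (i, l) * [:- M l j:])"
    using assms(3) by (intro sum.cong) (auto simp: char_poly_matrix_def distrib_left)
  also have "\<dots> = D $$ (i, j) * [:0, 1:] + (\<Sum>l<N. D $$ (i, l) * [:- M l j:])"
    using assms(3) by (simp only: sum.distrib sum.delta finite_lessThan lessThan_iff if_True)
  finally have "(if i = j then char_poly ?A else 0)
      = D $$ (i, j) * [:0, 1:] + (\<Sum>l<N. D $$ (i, l) * [:- M l j:])"
    unfolding adj .
  from arg_cong[OF this[symmetric], of "\<lambda>q. coeff q k"] show ?thesis
    using assms(2,3) by (cases "i = j") (simp_all add: fmat_mult_def coeff_sum sum_negf mult.commute)
qed

theorem cayley_hamilton_fmat: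
  fixes M :: "nat \<Rightarrow> nat \<Rightarrow> 'a::comm_ring_1"
  shows "fmat_poly N (char_poly (mat N N (\<lambda>(i, j). M i j))) M = (\<lambda>i j. 0)"
proof -
  let ?p = "char_poly (mat N N (\<lambda>(i, j). M i j))"
  define D where "D = adj_mat (char_poly_matrix (mat N N (\<lambda>(i, j). M i j)))"
  define Dk where "Dk k = (\<lambda>i l. coeff (D $$ (i, l)) k)" for k
  define Ek where "Ek k = (\<lambda>i l. coeff (D $$ (i, l) * [:0, 1:]) k)" for k
  define F where "F k = fmat_mult N (Ek k) (fmat_pow N M k)" for k
  have Ek_Suc: "Ek (Suc k) = Dk k" for k
    by (simp add: Ek_def Dk_def coeff_pCons' fun_eq_iff)
  text \<open>The adjugate identity \<open>adj(X - M) (X - M) = p(X)\<close>, read off coefficientwise, makes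
    \<open>p(M) = \<Sum>k. p\<^sub>k M\<^sup>k\<close> a telescoping sum.\<close>
  have telescope: "coeff ?p k * fmat_pow N M k i j = F k i j - F (Suc k) i j" for k i j
  proof (cases "i < N \<and> j < N")
    case True
    have "fmat_mult N (\<lambda>i r. if i = r then coeff ?p k else 0) (fmat_pow N M k)
        = fmat_mult N (\<lambda>i r. Ek k i r - fmat_mult N (Dk k) M i r) (fmat_pow N M k)"
      by (rule fmat_mult_cong) (simp_all only: Ek_def Dk_def D_def char_poly_adjugate_coeff)
    also have "\<dots> = (\<lambda>i j. F k i j - F (Suc k) i j)"
      unfolding fmat_mult_diff_left F_def Ek_Suc by (simp add: fmat_mult_assoc fmat_pow_commute)
    finally have "fmat_mult N (\<lambda>i r. if i = r then coeff ?p k else 0) (fmat_pow N M k) i j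
        = F k i j - F (Suc k) i j" by simp
    then show ?thesis
      using True unfolding fmat_mult_def by (simp add: if_distrib[of "\<lambda>x. x * _"] cong: if_cong)
  next
    case False
    then show ?thesis using fmat_pow_outside[of N i j M k] by (auto simp: F_def fmat_mult_def)
  qed
  define K where "K = Suc (degree ?p + (\<Sum>i<N. \<Sum>l<N. degree (D $$ (i, l))))"
  have "Dk K i l = 0" if "i < N" "l < N" for i l
  proof -
    have "degree (D $$ (i, l)) \<le> (\<Sum>l<N. degree (D $$ (i, l)))"
      using that by (intro member_le_sum) auto
    also have "\<dots> \<le> (\<Sum>i<N. \<Sum>l<N. degree (D $$ (i, l)))"
      using that by (intro member_le_sum[of i "{..<N}" "\<lambda>i. \<Sum>l<N. degree (D $$ (i, l))"]) auto
    finally show ?thesis unfolding Dk_def K_def by (intro coeff_eq_0) simp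
  qed
  then have "F (Suc K) = fmat_mult N (\<lambda>i j. 0) (fmat_pow N M (Suc K))"
    unfolding F_def Ek_Suc by (intro fmat_mult_cong) auto
  then have F_end: "F (Suc K) = (\<lambda>i j. 0)" by (simp add: fmat_mult_zero_left)
  have "Ek 0 = (\<lambda>i l. 0)" by (simp add: Ek_def fun_eq_iff)
  then have F_start: "F 0 = (\<lambda>i j. 0)" by (simp add: F_def fmat_mult_zero_left)
  have "fmat_poly N ?p M i j = 0" for i j
  proof -
    have "degree ?p < Suc K" unfolding K_def by simp
    then have "fmat_poly N ?p M i j = (\<Sum>k<Suc K. F k i j - F (Suc k) i j)"
      by (simp only: fmat_poly_eq_sum telescope)
    also have "\<dots> = F 0 i j - F (Suc K) i j" by (rule sum_lessThan_telescope')
    finally show ?thesis by (simp add: F_start F_end)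
  qed
  then show ?thesis by blast
qed

section \<open>Kronecker products acting on tensor powers\<close>

text \<open>A vector of the \<open>m\<close>-th tensor power of an \<open>N\<close>-dimensional free module is a function on the
  index lists \<open>idx m N\<close> (extended by zero). \<open>factor_act m N j B\<close> applies the matrix \<open>B\<close> to
  the \<open>j\<close>-th tensor factor, and \<open>kron_act m N As r\<close> applies \<open>As l\<close> to factor \<open>l\<close> for every
  \<open>l < r\<close>; for \<open>r = m\<close> this is the Kronecker product (see \<open>kron_act_full\<close>).\<close>

definition factor_act ::
  "nat \<Rightarrow> nat \<Rightarrow> nat \<Rightarrow> (nat \<Rightarrow> nat \<Rightarrow> 'a::comm_ring_1) \<Rightarrow> (nat list \<Rightarrow> 'a) \<Rightarrow> nat list \<Rightarrow> 'a" where
  "factor_act m N j B v = (\<lambda>ii. if ii \<in> idx m N then \<Sum>k<N. B (ii ! j) k * v (ii[j := k]) else 0)"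

definition supported_idx :: "nat \<Rightarrow> nat \<Rightarrow> (nat list \<Rightarrow> 'a::comm_ring_1) \<Rightarrow> bool" where
  "supported_idx m N v \<longleftrightarrow> (\<forall>ii. ii \<notin> idx m N \<longrightarrow> v ii = 0)"

lemma idx_update: "ii \<in> idx m N \<Longrightarrow> k < N \<Longrightarrow> ii[j := k] \<in> idx m N"
  unfolding idx_def by (auto dest: set_update_subset_insert[THEN subsetD])

lemma idx_nth_less: "ii \<in> idx m N \<Longrightarrow> j < m \<Longrightarrow> ii ! j < N"
  unfolding idx_def by auto

lemma idx_length: "ii \<in> idx m N \<Longrightarrow> length ii = m"
  unfolding idx_def by auto

lemma supported_factor_act: "supported_idx m N (factor_act m N j B v)"
  unfolding supported_idx_def factor_act_def by auto

lemma factor_act_commute: assumes "j \<noteq> l" "j < m" "l < m"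
  shows "factor_act m N j B (factor_act m N l C v) = factor_act m N l C (factor_act m N j B v)"
proof
  fix ii
  show "factor_act m N j B (factor_act m N l C v) ii = factor_act m N l C (factor_act m N j B v) ii"
  proof (cases "ii \<in> idx m N")
    case True
    have "factor_act m N j B (factor_act m N l C v) ii
        = (\<Sum>k<N. \<Sum>k'<N. B (ii ! j) k * C (ii ! l) k' * v (ii[j := k, l := k']))"
      using True assms unfolding factor_act_def by (auto simp: idx_update sum_distrib_left mult.assoc intro!: sum.cong)
    also have "\<dots> = (\<Sum>k'<N. \<Sum>k<N. B (ii ! j) k * C (ii ! l) k' * v (ii[j := k, l := k']))"
      by (rule sum.swap)
    also have "\<dots> = factor_act m N l C (factor_act m N j B v) ii"
      using True assms unfolding factor_act_def
      by (auto simp: idx_update sum_distrib_left mult.assoc mult.left_commute list_update_swap intro!: sum.cong)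
    finally show ?thesis .
  qed (simp add: factor_act_def)
qed

lemma factor_act_fmat_mult: assumes "j < m"
  shows "factor_act m N j (fmat_mult N B C) v = factor_act m N j B (factor_act m N j C v)"
proof
  fix ii
  show "factor_act m N j (fmat_mult N B C) v ii = factor_act m N j B (factor_act m N j C v) ii"
  proof (cases "ii \<in> idx m N")
    case True
    have jN: "ii ! j < N" using idx_nth_less[OF True assms] .
    have "factor_act m N j (fmat_mult N B C) v ii = (\<Sum>k'<N. \<Sum>k<N. B (ii ! j) k * C k k' * v (ii[j := k']))"
      using True jN unfolding factor_act_def fmat_mult_def by (auto simp: sum_distrib_right intro!: sum.cong)
    also have "\<dots> = (\<Sum>k<N. \<Sum>k'<N. B (ii ! j) k * C k k' * v (ii[j := k']))"
      by (rule sum.swap)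
    also have "\<dots> = factor_act m N j B (factor_act m N j C v) ii"
      using True assms unfolding factor_act_def
      by (auto simp: idx_update sum_distrib_left mult.assoc idx_length intro!: sum.cong)
    finally show ?thesis .
  qed (simp add: factor_act_def)
qed

lemma factor_act_fmat_one: assumes "supported_idx m N v" "j < m" shows "factor_act m N j (fmat_one N) v = v"
proof
  fix ii
  show "factor_act m N j (fmat_one N) v ii = v ii"
  proof (cases "ii \<in> idx m N")
    case True
    have jN: "ii ! j < N" using idx_nth_less[OF True assms(2)] .
    have "factor_act m N j (fmat_one N) v ii = (\<Sum>k<N. (if ii ! j = k then 1 else 0) * v (ii[j := k]))"
      using True unfolding factor_act_def fmat_one_def by (auto intro!: sum.cong)
    also have "\<dots> = (\<Sum>k<N. if k = ii ! j then v (ii[j := k]) else 0)"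
      by (rule sum.cong) auto
    also have "\<dots> = v ii" using jN by (simp add: sum.delta)
    finally show ?thesis .
  qed (use assms in \<open>simp add: factor_act_def supported_idx_def\<close>)
qed

lemma factor_act_zero: "factor_act m N j (\<lambda>a b. 0) v = (\<lambda>ii. 0)"
  unfolding factor_act_def by auto

lemma factor_act_diff_cmult_mat: "factor_act m N j (\<lambda>a b. X a b - c * Y a b) v
    = (\<lambda>ii. factor_act m N j X v ii - c * factor_act m N j Y v ii)"
  unfolding factor_act_def by (auto simp: fun_eq_iff left_diff_distrib sum_subtractf sum_distrib_left mult.assoc)

lemma factor_act_diff_cmult: "factor_act m N j B (\<lambda>ii. v ii - c * w ii)
    = (\<lambda>ii. factor_act m N j B v ii - c * factor_act m N j B w ii)"
  unfolding factor_act_def by (auto simp: fun_eq_iff right_diff_distrib sum_subtractf sum_distrib_left mult.left_commute)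

lemma factor_act_cmult: "factor_act m N j B (\<lambda>ii. c * v ii) = (\<lambda>ii. c * factor_act m N j B v ii)"
  unfolding factor_act_def by (auto simp: fun_eq_iff sum_distrib_left mult.left_commute)

fun kron_act ::
  "nat \<Rightarrow> nat \<Rightarrow> (nat \<Rightarrow> nat \<Rightarrow> nat \<Rightarrow> 'a::comm_ring_1) \<Rightarrow> nat \<Rightarrow> (nat list \<Rightarrow> 'a) \<Rightarrow> nat list \<Rightarrow> 'a" where
  "kron_act m N As 0 v = v"
| "kron_act m N As (Suc r) v = kron_act m N As r (factor_act m N r (As r) v)"

lemma supported_kron_act: "supported_idx m N v \<Longrightarrow> supported_idx m N (kron_act m N As r v)"
  by (induction r arbitrary: v) (auto simp: supported_factor_act)

lemma kron_act_diff_cmult: "kron_act m N As r (\<lambda>ii. v ii - c * w ii)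
    = (\<lambda>ii. kron_act m N As r v ii - c * kron_act m N As r w ii)"
  by (induction r arbitrary: v w) (auto simp: factor_act_diff_cmult)

lemma kron_act_cmult: "kron_act m N As r (\<lambda>ii. c * v ii) = (\<lambda>ii. c * kron_act m N As r v ii)"
  by (induction r arbitrary: v) (auto simp: factor_act_cmult)

lemma kron_act_factor_act_commute: assumes "j < m" "r \<le> m"
  shows "kron_act m N As r (factor_act m N j (As j) v) = factor_act m N j (As j) (kron_act m N As r v)"
  using assms(2)
proof (induction r arbitrary: v)
  case 0 then show ?case by simp
next
  case (Suc r)
  have "factor_act m N r (As r) (factor_act m N j (As j) v) = factor_act m N j (As j) (factor_act m N r (As r) v)"
    using assms(1) Suc.prems by (cases "r = j") (auto intro: factor_act_commute)
  then show ?case using Suc by simp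
qed

lemma kron_act_eigen: assumes "\<forall>l<r. factor_act m N l (As l) v = (\<lambda>ii. mu l * v ii)"
  shows "kron_act m N As r v = (\<lambda>ii. (\<Prod>l<r. mu l) * v ii)"
  using assms
proof (induction r arbitrary: v)
  case 0 then show ?case by simp
next
  case (Suc r)
  have "kron_act m N As (Suc r) v = kron_act m N As r (\<lambda>ii. mu r * v ii)" using Suc.prems by simp
  also have "\<dots> = (\<lambda>ii. mu r * kron_act m N As r v ii)" by (rule kron_act_cmult)
  also have "\<dots> = (\<lambda>ii. mu r * ((\<Prod>l<r. mu l) * v ii))" using Suc by simp
  finally show ?case by (simp add: mult_ac)
qed

definition idx_agree_from :: "nat \<Rightarrow> nat \<Rightarrow> nat \<Rightarrow> nat list \<Rightarrow> nat list set" where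
  "idx_agree_from m N r ii = {js \<in> idx m N. \<forall>l. r \<le> l \<and> l < m \<longrightarrow> js ! l = ii ! l}"

lemma idx_agree_from_Suc_bij: assumes "ii \<in> idx m N" "r < m"
  shows "bij_betw (\<lambda>(js, k). js[r := k]) (idx_agree_from m N r ii \<times> {..<N}) (idx_agree_from m N (Suc r) ii)"
proof (rule bij_betw_byWitness[of _ "\<lambda>js. (js[r := ii ! r], js ! r)"])
  show "\<forall>a\<in>idx_agree_from m N r ii \<times> {..<N}.
      (\<lambda>js. (js[r := ii ! r], js ! r)) ((\<lambda>(js, k). js[r := k]) a) = a"
    using assms(2) by (auto simp: idx_agree_from_def idx_length list_update_same_conv)
  show "(\<lambda>(js, k). js[r := k]) ` (idx_agree_from m N r ii \<times> {..<N}) \<subseteq> idx_agree_from m N (Suc r) ii"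
    by (auto simp: idx_agree_from_def idx_update idx_length nth_list_update)
  show "(\<lambda>js. (js[r := ii ! r], js ! r)) ` idx_agree_from m N (Suc r) ii \<subseteq> idx_agree_from m N r ii \<times> {..<N}"
    using assms idx_nth_less[OF assms]
    by (auto simp: idx_agree_from_def idx_update idx_length nth_list_update idx_nth_less)
qed auto

lemma idx_agree_from_0: assumes "ii \<in> idx m N" shows "idx_agree_from m N 0 ii = {ii}"
  using assms unfolding idx_agree_from_def by (auto simp: idx_length intro: nth_equalityI)

lemma idx_agree_from_all: "idx_agree_from m N m ii = idx m N" unfolding idx_agree_from_def by auto

lemma sum_idx_agree_from_Suc:
  assumes "ii \<in> idx m N" "r < m"
  shows "(\<Sum>js\<in>idx_agree_from m N r ii. (\<Prod>l<r. As l (ii ! l) (js ! l)) * factor_act m N r (As r) v js)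
    = (\<Sum>js\<in>idx_agree_from m N (Suc r) ii. (\<Prod>l<Suc r. As l (ii ! l) (js ! l)) * v js)"
    (is "?lhs = (\<Sum>js\<in>_. ?P js * v js)")
proof -
  have "?P (js[r := k]) = (\<Prod>l<r. As l (ii ! l) (js ! l)) * As r (ii ! r) k"
    if "js \<in> idx_agree_from m N r ii" for js k
    using that assms(2) by (auto simp: idx_agree_from_def idx_length nth_list_update intro!: prod.cong)
  then have "?lhs = (\<Sum>js\<in>idx_agree_from m N r ii. \<Sum>k<N. ?P (js[r := k]) * v (js[r := k]))"
    using assms(2) unfolding factor_act_def
    by (intro sum.cong) (auto simp: idx_agree_from_def sum_distrib_left mult.assoc)
  also have "\<dots> = (\<Sum>(js, k)\<in>idx_agree_from m N r ii \<times> {..<N}. ?P (js[r := k]) * v (js[r := k]))"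
    by (rule sum.cartesian_product)
  also have "\<dots> = (\<Sum>js\<in>idx_agree_from m N (Suc r) ii. ?P js * v js)"
    using sum.reindex_bij_betw[OF idx_agree_from_Suc_bij[OF assms], of "\<lambda>js. ?P js * v js"]
    by (simp add: case_prod_unfold)
  finally show ?thesis .
qed

lemma kron_act_eq_sum: assumes "supported_idx m N v" "r \<le> m"
  shows "kron_act m N As r v ii = (if ii \<in> idx m N then
     \<Sum>js\<in>idx_agree_from m N r ii. (\<Prod>l<r. As l (ii ! l) (js ! l)) * v js else 0)"
  using assms
proof (induction r arbitrary: v)
  case 0 then show ?case by (auto simp: idx_agree_from_0 supported_idx_def)
next
  case (Suc r)
  then show ?case
    using Suc.IH[OF supported_factor_act] by (simp add: sum_idx_agree_from_Suc)
qed

lemma kron_act_full: assumes "supported_idx m N v"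
  shows "kron_act m N As m v ii = (if ii \<in> idx m N then
     \<Sum>js\<in>idx m N. (\<Prod>l<m. As l (ii ! l) (js ! l)) * v js else 0)"
  using kron_act_eq_sum[OF assms le_refl] by (simp add: idx_agree_from_all)

section \<open>Eigenvalues of Kronecker products\<close>

definition linear_factors :: "(nat \<Rightarrow> 'a::comm_ring_1) \<Rightarrow> nat \<Rightarrow> 'a poly" where
  "linear_factors mu s = (\<Prod>i<s. [:- mu i, 1:])"

lemma linear_factors_Suc: "linear_factors mu (Suc s) = [:- mu s, 1:] * linear_factors mu s"
  unfolding linear_factors_def by (simp add: mult.commute)

locale kron_annihilated =
  fixes m N :: nat and As :: "nat \<Rightarrow> nat \<Rightarrow> nat \<Rightarrow> 'a::idom" and mus :: "nat \<Rightarrow> nat \<Rightarrow> 'a"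
    and a b :: 'a
  assumes annihilated: "l < m \<Longrightarrow> fmat_poly N (linear_factors (mus l) N) (As l) = (\<lambda>i j. 0)"
begin

definition common_eigvec :: "nat \<Rightarrow> (nat \<Rightarrow> nat) \<Rightarrow> (nat list \<Rightarrow> 'a) \<Rightarrow> bool" where
  "common_eigvec r f u \<longleftrightarrow> supported_idx m N u \<and>
     (\<lambda>ii. b * kron_act m N As m u ii) = (\<lambda>ii. a * u ii) \<and>
     (\<forall>l<r. factor_act m N l (As l) u = (\<lambda>ii. mus l (f l) * u ii))"

text \<open>Everything in sight commutes with the action of \<open>As r\<close> on factor \<open>r\<close>, so applying
  \<open>As r - c\<close> preserves the eigenvector equations found so far.\<close>

lemma common_eigvec_step: assumes "r < m" "common_eigvec r f u"
  shows "common_eigvec r f (\<lambda>ii. factor_act m N r (As r) u ii - c * u ii)"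
proof -
  let ?X = "factor_act m N r (As r)"
  have sup: "supported_idx m N u" and W: "(\<lambda>ii. b * kron_act m N As m u ii) = (\<lambda>ii. a * u ii)"
    and E: "\<forall>l<r. factor_act m N l (As l) u = (\<lambda>ii. mus l (f l) * u ii)"
    using assms(2) unfolding common_eigvec_def by auto
  have "(\<lambda>ii. b * kron_act m N As m (\<lambda>ii. ?X u ii - c * u ii) ii)
      = (\<lambda>ii. b * (?X (kron_act m N As m u) ii - c * kron_act m N As m u ii))"
    using kron_act_factor_act_commute[OF assms(1) le_refl, of N As u] by (simp add: kron_act_diff_cmult)
  also have "\<dots> = (\<lambda>ii. ?X (\<lambda>ii. b * kron_act m N As m u ii) ii - c * (b * kron_act m N As m u ii))"
    by (simp add: factor_act_cmult algebra_simps)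
  also have "\<dots> = (\<lambda>ii. ?X (\<lambda>ii. a * u ii) ii - c * (a * u ii))"
    using W by (simp add: fun_eq_iff)
  also have "\<dots> = (\<lambda>ii. a * (?X u ii - c * u ii))"
    by (simp add: factor_act_cmult algebra_simps)
  finally have W': "(\<lambda>ii. b * kron_act m N As m (\<lambda>ii. ?X u ii - c * u ii) ii)
      = (\<lambda>ii. a * (?X u ii - c * u ii))" .
  have E': "factor_act m N l (As l) (\<lambda>ii. ?X u ii - c * u ii) = (\<lambda>ii. mus l (f l) * (?X u ii - c * u ii))"
    if "l < r" for l
  proof -
    have "factor_act m N l (As l) (\<lambda>ii. ?X u ii - c * u ii)
        = (\<lambda>ii. ?X (factor_act m N l (As l) u) ii - c * factor_act m N l (As l) u ii)"
      using factor_act_commute[of l r m N "As l" "As r" u] that assms(1)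
      by (simp add: factor_act_diff_cmult)
    also have "\<dots> = (\<lambda>ii. ?X (\<lambda>ii. mus l (f l) * u ii) ii - c * (mus l (f l) * u ii))"
      using E that by simp
    also have "\<dots> = (\<lambda>ii. mus l (f l) * (?X u ii - c * u ii))"
      by (simp only: factor_act_cmult) (simp add: algebra_simps)
    finally show ?thesis .
  qed
  have "supported_idx m N (\<lambda>ii. ?X u ii - c * u ii)"
    using sup supported_factor_act[of m N r "As r" u] unfolding supported_idx_def by auto
  with W' E' show ?thesis unfolding common_eigvec_def by auto
qed

text \<open>Since \<open>\<Prod>\<^sub>s (As r - mus r s)\<close> kills \<open>u\<close>, the last nonzero vector in the chain
  \<open>u, (As r - mus r 0) u, \<dots>\<close> is an eigenvector of \<open>As r\<close> acting on factor \<open>r\<close>.\<close>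

lemma common_eigvec_extend: assumes "r < m" "common_eigvec r f v" "v \<noteq> (\<lambda>ii. 0)"
  shows "\<exists>v' s. s < N \<and> common_eigvec (Suc r) (f(r := s)) v' \<and> v' \<noteq> (\<lambda>ii. 0)"
proof -
  let ?X = "factor_act m N r (As r)"
  define ch where "ch s = factor_act m N r (fmat_poly N (linear_factors (mus r) s) (As r)) v" for s
  have "supported_idx m N v" using assms(2) unfolding common_eigvec_def by simp
  then have ch0: "ch 0 = v"
    by (simp add: ch_def linear_factors_def fmat_poly_1 factor_act_fmat_one assms(1))
  have chN: "ch N = (\<lambda>ii. 0)" unfolding ch_def using annihilated assms(1) by (simp add: factor_act_zero)
  have chS: "ch (Suc s) = (\<lambda>ii. ?X (ch s) ii - mus r s * ch s ii)" for s
    unfolding ch_def linear_factors_Suc fmat_poly_linear_mult factor_act_diff_cmult_mat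
      factor_act_fmat_mult[OF assms(1)] ..
  have ch_eig: "common_eigvec r f (ch s)" for s
    by (induction s) (use ch0 assms(2) in simp, simp only: chS common_eigvec_step[OF assms(1)])
  have "\<exists>s<N. ch s \<noteq> (\<lambda>ii. 0) \<and> ch (Suc s) = (\<lambda>ii. 0)"
  proof (rule ccontr)
    assume "\<not> ?thesis"
    then have "s \<le> N \<Longrightarrow> ch s \<noteq> (\<lambda>ii. 0)" for s
      by (induction s) (use ch0 assms(3) in \<open>auto simp: Suc_le_eq\<close>)
    then show False using chN by blast
  qed
  then obtain s where s: "s < N" "ch s \<noteq> (\<lambda>ii. 0)" "ch (Suc s) = (\<lambda>ii. 0)" by blast
  have "?X (ch s) = (\<lambda>ii. mus r s * ch s ii)"
    using s(3) unfolding chS by (simp add: fun_eq_iff)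
  then have "common_eigvec (Suc r) (f(r := s)) (ch s)"
    using ch_eig[of s] unfolding common_eigvec_def by (auto simp: less_Suc_eq)
  then show ?thesis using s by blast
qed

lemma kron_eigenvalue_factors:
  assumes "supported_idx m N w" "w \<noteq> (\<lambda>ii. 0)" "(\<lambda>ii. b * kron_act m N As m w ii) = (\<lambda>ii. a * w ii)"
  shows "\<exists>f. (\<forall>l<m. f l < N) \<and> a = b * (\<Prod>l<m. mus l (f l))"
proof -
  have "r \<le> m \<Longrightarrow> \<exists>v f. common_eigvec r f v \<and> v \<noteq> (\<lambda>ii. 0) \<and> (\<forall>l<r. f l < N)" for r
  proof (induction r)
    case 0 then show ?case using assms unfolding common_eigvec_def by auto
  next
    case (Suc r)
    then obtain v f where v: "common_eigvec r f v" "v \<noteq> (\<lambda>ii. 0)" "\<forall>l<r. f l < N" by auto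
    obtain v' s where vs: "s < N" "common_eigvec (Suc r) (f(r := s)) v'" "v' \<noteq> (\<lambda>ii. 0)"
      using common_eigvec_extend[OF _ v(1,2)] Suc.prems by auto
    moreover have "\<forall>l<Suc r. (f(r := s)) l < N" using v(3) vs(1) by (simp add: less_Suc_eq)
    ultimately show ?case by blast
  qed
  then obtain v f where v: "common_eigvec m f v" "v \<noteq> (\<lambda>ii. 0)" "\<forall>l<m. f l < N" by blast
  then have "kron_act m N As m v = (\<lambda>ii. (\<Prod>l<m. mus l (f l)) * v ii)"
    unfolding common_eigvec_def by (intro kron_act_eigen) auto
  moreover obtain ii where "v ii \<noteq> 0" using v(2) by auto
  moreover have "b * kron_act m N As m v ii = a * v ii"
    using v(1) unfolding common_eigvec_def by (metis (mono_tags))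
  ultimately have "b * (\<Prod>l<m. mus l (f l)) = a" by (simp add: mult.assoc)
  then show ?thesis using v(3) by auto
qed

end

theorem kron_eigenvalue_product_of_roots:
  fixes As :: "nat \<Rightarrow> nat \<Rightarrow> nat \<Rightarrow> 'a::idom"
  assumes "\<And>l. l < m \<Longrightarrow> char_poly (mat N N (\<lambda>(i, j). As l i j)) = linear_factors (mus l) N"
    and "supported_idx m N w" "w \<noteq> (\<lambda>ii. 0)"
    and "(\<lambda>ii. b * kron_act m N As m w ii) = (\<lambda>ii. a * w ii)"
  shows "\<exists>f. (\<forall>l<m. f l < N) \<and> a = b * (\<Prod>l<m. mus l (f l))"
proof -
  interpret kron_annihilated m N As mus a b
    by unfold_locales (use assms(1) cayley_hamilton_fmat in metis)
  show ?thesis using kron_eigenvalue_factors[OF assms(2-4)] .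
qed

section \<open>Transfer to tensor powers of Puiseux series\<close>

lemma in_var_foldr_ser_mult:
  "\<forall>f\<in>set fs. is_mpuiseux (in_var j f) \<Longrightarrow>
    in_var j (foldr ser_mult fs ser_one) = Rep_mpuiseux (\<Prod>f\<leftarrow>fs. Abs_mpuiseux (in_var j f))"
  by (induction fs)
     (simp_all add: in_var_one one_mpuiseux.rep_eq in_var_mult times_mpuiseux.rep_eq Rep_Abs_mpuiseux)

lemma in_var_char_poly_at:
  assumes "\<forall>i<N. \<forall>j<N. A i j \<in> puiseux" "y \<in> puiseux"
  shows "in_var l (char_poly_at N A y)
    = Rep_mpuiseux (poly (char_poly (mat N N (\<lambda>(i, j). puiseux_var l (A i j)))) (puiseux_var l y))"
proof -
  define M where "M i j = ser_diff (if i = j then y else ser_zero) (A i j)" for i j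
  have "Rep_mpuiseux ((if i = j then puiseux_var l y else 0) - puiseux_var l (A i j)) = in_var l (M i j)"
    if "i < N" "j < N" for i j
    using assms that by (simp add: M_def in_var_diff in_var_zero minus_mpuiseux.rep_eq zero_mpuiseux.rep_eq
        Rep_puiseux_var)
  then have M: "is_mpuiseux (in_var l (M i j))"
    "Abs_mpuiseux (in_var l (M i j)) = (if i = j then puiseux_var l y else 0) - puiseux_var l (A i j)"
    if "i < N" "j < N" for i j
    using that is_mpuiseux_Rep Abs_mpuiseux_eqI by metis+
  have "in_var l (char_poly_at N A y) = Rep_mpuiseux (det (mat N N (\<lambda>(i, j). Abs_mpuiseux (in_var l (M i j)))))"
    unfolding char_poly_at_def M_def[symmetric] by (rule in_var_ser_det) (simp add: M)
  also have "mat N N (\<lambda>(i, j). Abs_mpuiseux (in_var l (M i j)))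
      = mat N N (\<lambda>(i, j). (if i = j then puiseux_var l y else 0) - puiseux_var l (A i j))"
    by (rule eq_matI) (simp_all add: M)
  finally show ?thesis by (simp add: poly_char_poly_mat)
qed

lemma in_var_foldr_linear_factors:
  assumes "\<forall>i<N. lam i \<in> puiseux" "y \<in> puiseux"
  shows "in_var l (foldr ser_mult (map (\<lambda>i. ser_diff y (lam i)) [0..<N]) ser_one)
    = Rep_mpuiseux (poly (linear_factors (\<lambda>i. puiseux_var l (lam i)) N) (puiseux_var l y))"
proof -
  have factor: "Abs_mpuiseux (in_var l (ser_diff y (lam i))) = puiseux_var l y - puiseux_var l (lam i)"
    if "i < N" for i
    using assms that by (simp add: puiseux_var_def[symmetric] puiseux_var_diff)
  have "\<forall>f\<in>set (map (\<lambda>i. ser_diff y (lam i)) [0..<N]). is_mpuiseux (in_var l f)"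
    using assms by (auto simp: in_var_diff intro!: is_mpuiseux_diff is_mpuiseux_in_var)
  then show ?thesis
    by (simp add: in_var_foldr_ser_mult linear_factors_def poly_prod factor atLeast0LessThan
        prod.distinct_set_conv_list[symmetric])
qed

lemma char_poly_puiseux_var:
  assumes A: "\<forall>i<N. \<forall>j<N. A i j \<in> puiseux" and lam: "\<forall>i<N. lam i \<in> puiseux"
    and split: "\<forall>x\<in>puiseux. char_poly_at N A x = foldr ser_mult (map (\<lambda>i. ser_diff x (lam i)) [0..<N]) ser_one"
  shows "char_poly (mat N N (\<lambda>(i, j). puiseux_var l (A i j))) = linear_factors (\<lambda>i. puiseux_var l (lam i)) N"
proof -
  let ?P = "char_poly (mat N N (\<lambda>(i, j). puiseux_var l (A i j))) - linear_factors (\<lambda>i. puiseux_var l (lam i)) N"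
  let ?const = "\<lambda>r::real. \<lambda>q::rat. if q = 0 then r else 0"
  text \<open>The two polynomials agree at the image of every Puiseux series, in particular at
    infinitely many constants.\<close>
  have "poly ?P (puiseux_var l y) = 0" if "y \<in> puiseux" for y
    using in_var_char_poly_at[OF A that, of l] in_var_foldr_linear_factors[OF lam that, of l] split that
    by (simp add: Rep_mpuiseux_inject)
  then have "range (\<lambda>r. puiseux_var l (?const r)) \<subseteq> {x. poly ?P x = 0}"
    using constant_puiseux by auto
  moreover have "infinite (range (\<lambda>r. puiseux_var l (?const r)))"
    using puiseux_var_constant_inj[of l] by (simp add: finite_image_iff infinite_UNIV_char_0)
  ultimately have "?P = 0" using poly_roots_finite finite_subset by blast
  then show ?thesis by simp
qed

lemma frac_eigenvalue_kron_act:
  assumes A: "\<forall>i<N. \<forall>j<N. A i j \<in> puiseux" and a: "a \<in> Em m" and b: "b \<in> Em m"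
    and eig: "frac_eigenvalue m N (tensor_matrix m A) a b"
  shows "\<exists>w. supported_idx m N w \<and> w \<noteq> (\<lambda>ii. 0) \<and>
    (\<lambda>ii. Abs_mpuiseux b * kron_act m N (\<lambda>l i k. puiseux_var l (A i k)) m w ii) = (\<lambda>ii. Abs_mpuiseux a * w ii)"
proof -
  obtain v where v_Em: "\<forall>js\<in>idx m N. v js \<in> Em m" and v_nz: "\<exists>js\<in>idx m N. v js \<noteq> (\<lambda>e. 0)"
    and v_eig: "\<forall>ii\<in>idx m N. mser_mult b (\<lambda>e. \<Sum>js\<in>idx m N. mser_mult (tensor_matrix m A ii js) (v js) e)
                          = mser_mult a (v ii)"
    using eig unfolding frac_eigenvalue_def by blast
  define w where "w ii = (if ii \<in> idx m N then Abs_mpuiseux (v ii) else 0)" for ii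
  have Rep_w: "Rep_mpuiseux (w js) = v js" if "js \<in> idx m N" for js
  proof -
    have "is_mpuiseux (v js)" using that v_Em is_mpuiseux_Em by blast
    then show ?thesis using that by (simp add: w_def Rep_Abs_mpuiseux)
  qed
  have sup: "supported_idx m N w" unfolding supported_idx_def w_def by auto
  have "w \<noteq> (\<lambda>ii. 0)"
    using v_nz Rep_w zero_mpuiseux.rep_eq by (metis (mono_tags))
  moreover have "Abs_mpuiseux b * kron_act m N (\<lambda>l i k. puiseux_var l (A i k)) m w ii = Abs_mpuiseux a * w ii"
    for ii
  proof (cases "ii \<in> idx m N")
    case True
    have entry: "Rep_mpuiseux (\<Prod>l<m. puiseux_var l (A (ii ! l) (js ! l))) = tensor_matrix m A ii js"
      if "js \<in> idx m N" for js
      unfolding tensor_matrix_def using A True that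
      by (intro tens_eq_prod_puiseux_var[symmetric]) (auto simp: idx_nth_less)
    have "Rep_mpuiseux (Abs_mpuiseux b * kron_act m N (\<lambda>l i k. puiseux_var l (A i k)) m w ii)
        = mser_mult b (\<lambda>e. \<Sum>js\<in>idx m N. mser_mult (tensor_matrix m A ii js) (v js) e)"
      using True b by (simp add: kron_act_full[OF sup] times_mpuiseux.rep_eq Rep_mpuiseux_sum
          Rep_Abs_mpuiseux is_mpuiseux_Em entry Rep_w)
    also have "\<dots> = Rep_mpuiseux (Abs_mpuiseux a * w ii)"
      using v_eig True a by (simp add: times_mpuiseux.rep_eq Rep_Abs_mpuiseux is_mpuiseux_Em Rep_w)
    finally show ?thesis by (simp add: Rep_mpuiseux_inject)
  next
    case False
    then show ?thesis using supported_kron_act[OF sup] by (simp add: supported_idx_def w_def)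
  qed
  ultimately show ?thesis using sup by blast
qed

theorem mainTheorem11:
  fixes n m :: nat and A :: "nat \<Rightarrow> nat \<Rightarrow> ser" and lam :: "nat \<Rightarrow> ser"
  assumes "1 \<le> n"
    and "\<forall>i<n-1. \<forall>j<n-1. A i j \<in> laurent_poly"
    and "\<forall>i<n-1. lam i \<in> puiseux"
    and "\<forall>x\<in>puiseux. char_poly_at (n-1) A x
           = foldr ser_mult (map (\<lambda>i. ser_diff x (lam i)) [0..<n-1]) ser_one"
    and "1 \<le> m"
  shows "\<forall>a\<in>Em m. \<forall>b\<in>Em m. b \<noteq> (\<lambda>e. 0) \<longrightarrow>
           frac_eigenvalue m (n-1) (tensor_matrix m A) a b \<longrightarrow>
           (\<exists>is\<in>idx m (n-1). a = mser_mult b (tens m (\<lambda>j. lam (is ! j))))"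
proof (intro ballI impI)
  fix a b assume a: "a \<in> Em m" and b: "b \<in> Em m"
    and eig: "frac_eigenvalue m (n-1) (tensor_matrix m A) a b"
  have A: "\<forall>i<n-1. \<forall>j<n-1. A i j \<in> puiseux" using assms(2) laurent_poly_puiseux by blast
  obtain w where w: "supported_idx m (n-1) w" "w \<noteq> (\<lambda>ii. 0)"
    "(\<lambda>ii. Abs_mpuiseux b * kron_act m (n-1) (\<lambda>l i k. puiseux_var l (A i k)) m w ii)
      = (\<lambda>ii. Abs_mpuiseux a * w ii)"
    using frac_eigenvalue_kron_act[OF A a b eig] by blast
  obtain f where f: "\<forall>l<m. f l < n-1"
    "Abs_mpuiseux a = Abs_mpuiseux b * (\<Prod>l<m. puiseux_var l (lam (f l)))"
    using kron_eigenvalue_product_of_roots[where mus = "\<lambda>l i. puiseux_var l (lam i)", OF _ w]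
      char_poly_puiseux_var[OF A assms(3,4)] by blast
  have "a = mser_mult b (tens m (\<lambda>j. lam (f j)))"
    using arg_cong[OF f(2), of Rep_mpuiseux] f(1) assms(3) a b
    by (simp add: times_mpuiseux.rep_eq Rep_Abs_mpuiseux is_mpuiseux_Em tens_eq_prod_puiseux_var)
  moreover have "tens m (\<lambda>j. lam (f j)) = tens m (\<lambda>j. lam (map f [0..<m] ! j))"
    by (rule tens_cong) simp
  moreover have "map f [0..<m] \<in> idx m (n-1)" using f(1) by (auto simp: idx_def)
  ultimately show "\<exists>is\<in>idx m (n-1). a = mser_mult b (tens m (\<lambda>j. lam (is ! j)))"
    by metis
qed

end
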